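(* Let $\mathfrak{A}$ be a unital $C^*$-algebra, $\theta,\alpha\in\mathrm{Aut}(\mathfrak{A})$, $u\in\mathfrak{A}$ unitary with $u\,\alpha(\theta(a))=\theta(\alpha(a))u$ for all $a$, $\omega_o$ a $\theta$-invariant state on $\mathfrak{A}$ and $\omega:=\omega_o\circ E$. Identify $(\mathcal{H}_{\omega_o},\pi_{\omega_o},V_{\omega_o,\theta},\xi_{\omega_o})$ with the restriction of $(\mathcal{H}_\omega,\pi_\omega|_{\mathfrak{A}},V_{\omega,\Phi_{\theta,u}},\xi_\omega)$ to the reducing subspace $\overline{\pi_\omega(\mathfrak{A})\xi_\omega}$. The following are equivalent: (i) $E_1^{V_{\omega_o,\theta}}=E_1^{V_{\omega,\Phi_{\theta,u}}}$; (ii) for each $n\ne0$, the equation $\pi_{\omega_o}(\alpha^{-n}(u_n))V_{\omega_o,\theta}\eta=\eta$ has no nonzero solution $\eta\in\mathcal{H}_{\omega_o}$. Consequently, if $\omega_o$ is weakly clustering for $\theta$, then $\omega$ is weakly clustering for $\Phi_{\theta,u}$ if and only if (ii) holds.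
   Context: $\mathfrak{A}\rtimes_\alpha\mathbb{Z}$ is generated by $\mathfrak{A}$ and a unitary $V$ with $VaV^*=\alpha(a)$; $E$ is the canonical conditional expectation onto $\mathfrak{A}$ ($E(aV^n)=\delta_{n,0}a$); $\Phi_{\theta,u}$ is the automorphism with $\Phi_{\theta,u}(a)=\theta(a)$, $\Phi_{\theta,u}(V)=uV$; $\omega$ is $\Phi_{\theta,u}$-invariant. The unitaries $u_n$: $u_0=I$, $u_n=u\alpha(u)\cdots\alpha^{n-1}(u)$ ($n\ge1$), $u_n=\alpha^{-1}(u^* )\cdots\alpha^{n}(u^* )$ ($n<0$). For an automorphism $\beta$ of $\mathfrak{B}$ and $\beta$-invariant state $\varphi$, the covariant GNS representation $(\mathcal{H}_\varphi,\pi_\varphi,V_{\varphi,\beta},\xi_\varphi)$ has $V_{\varphi,\beta}$ the unitary with $V_{\varphi,\beta}\xi_\varphi=\xi_\varphi$ and $V_{\varphi,\beta}\pi_\varphi(b)\xi_\varphi=\pi_\varphi(\beta(b))\xi_\varphi$. For an operator $T$, $E_1^T$ is the orthogonal projection onto $\{\eta\mid T\eta=\eta\}$. $\varphi$ is weakly clustering if $\frac1n\sum_{k=0}^{n-1}\varphi(a\beta^k(b))\to\varphi(a)\varphi(b)$ for all $a,b$; equivalently $\dim E_1^{V_{\varphi,\beta}}=1$. *)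

theory Defs
  imports "HOL-Analysis.Analysis"
begin

class complex_vector = real_vector +
  fixes scaleC :: "complex \<Rightarrow> 'a \<Rightarrow> 'a"
  assumes scaleC_add_right: "scaleC c (x + y) = scaleC c x + scaleC c y"
    and scaleC_add_left: "scaleC (c + d) x = scaleC c x + scaleC d x"
    and scaleC_scaleC: "scaleC c (scaleC d x) = scaleC (c * d) x"
    and scaleC_one: "scaleC 1 x = x"
    and scaleR_scaleC: "scaleR r x = scaleC (complex_of_real r) x"

class complex_normed_vector = complex_vector + real_normed_vector +
  assumes norm_scaleC: "norm (scaleC c x) = cmod c * norm x"

class complex_inner = complex_normed_vector +
  fixes cinner :: "'a \<Rightarrow> 'a \<Rightarrow> complex"
  assumes cinner_commute: "cinner x y = cnj (cinner y x)"
    and cinner_add_left: "cinner (x + y) z = cinner x z + cinner y z"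
    and cinner_scaleC_left: "cinner (scaleC c x) y = cnj c * cinner x y"
    and cinner_self_real: "Im (cinner x x) = 0"
    and norm_eq_sqrt_cinner: "norm x = sqrt (Re (cinner x x))"

class chilbert = complex_inner + complete_space

class cstar_algebra = complex_normed_vector + real_normed_algebra_1 + complete_space +
  fixes adj :: "'a \<Rightarrow> 'a"
  assumes adj_adj: "adj (adj x) = x"
    and adj_add: "adj (x + y) = adj x + adj y"
    and adj_mult: "adj (x * y) = adj y * adj x"
    and adj_scaleC: "adj (scaleC c x) = scaleC (cnj c) (adj x)"
    and mult_scaleC_left: "scaleC c x * y = scaleC c (x * y)"
    and mult_scaleC_right: "x * scaleC c y = scaleC c (x * y)"
    and cstar_identity: "norm (adj x * x) = (norm x)\<^sup>2"

definition clinear :: "('a::complex_vector \<Rightarrow> 'b::complex_vector) \<Rightarrow> bool" where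
  "clinear f \<longleftrightarrow> (\<forall>x y. f (x + y) = f x + f y) \<and> (\<forall>c x. f (scaleC c x) = scaleC c (f x))"

definition clinear_functional :: "('a::complex_vector \<Rightarrow> complex) \<Rightarrow> bool" where
  "clinear_functional f \<longleftrightarrow> (\<forall>x y. f (x + y) = f x + f y) \<and> (\<forall>c x. f (scaleC c x) = c * f x)"

definition star_hom :: "('a::cstar_algebra \<Rightarrow> 'b::cstar_algebra) \<Rightarrow> bool" where
  "star_hom f \<longleftrightarrow> clinear f \<and> (\<forall>x y. f (x * y) = f x * f y) \<and> (\<forall>x. f (adj x) = adj (f x)) \<and> f 1 = 1"

definition star_aut :: "('a::cstar_algebra \<Rightarrow> 'a) \<Rightarrow> bool" where
  "star_aut f \<longleftrightarrow> star_hom f \<and> bij f"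

definition unitary :: "'a::cstar_algebra \<Rightarrow> bool" where
  "unitary u \<longleftrightarrow> adj u * u = 1 \<and> u * adj u = 1"

definition positive :: "'a::cstar_algebra \<Rightarrow> bool" where
  "positive x \<longleftrightarrow> (\<exists>y. x = adj y * y)"

definition is_state :: "('a::cstar_algebra \<Rightarrow> complex) \<Rightarrow> bool" where
  "is_state \<phi> \<longleftrightarrow> clinear_functional \<phi> \<and>
     (\<forall>a. Im (\<phi> (adj a * a)) = 0 \<and> 0 \<le> Re (\<phi> (adj a * a))) \<and> \<phi> 1 = 1"

definition invariant_state :: "('a::cstar_algebra \<Rightarrow> complex) \<Rightarrow> ('a \<Rightarrow> 'a) \<Rightarrow> bool" where
  "invariant_state \<phi> \<beta> \<longleftrightarrow> is_state \<phi> \<and> (\<forall>a. \<phi> (\<beta> a) = \<phi> a)"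

definition weakly_clustering :: "('a::cstar_algebra \<Rightarrow> complex) \<Rightarrow> ('a \<Rightarrow> 'a) \<Rightarrow> bool" where
  "weakly_clustering \<phi> \<beta> \<longleftrightarrow>
     (\<forall>a b. (\<lambda>n. (\<Sum>k<n. \<phi> (a * (\<beta> ^^ k) b)) / of_nat n) \<longlonglongrightarrow> \<phi> a * \<phi> b)"

definition upow :: "'a::cstar_algebra \<Rightarrow> int \<Rightarrow> 'a" where
  "upow v n = (if 0 \<le> n then v ^ nat n else adj v ^ nat (- n))"

definition aut_pow :: "('a \<Rightarrow> 'a) \<Rightarrow> int \<Rightarrow> 'a \<Rightarrow> 'a" where
  "aut_pow \<alpha> n = (if 0 \<le> n then \<alpha> ^^ nat n else inv \<alpha> ^^ nat (- n))"

text \<open>u_n = u alpha(u) ... alpha^(n-1)(u) for n \<ge> 1 and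
  u_n = alpha^(-1)(u*) ... alpha^n(u*) for n < 0; u_0 = 1.\<close>
fun useq_pos :: "('a::cstar_algebra \<Rightarrow> 'a) \<Rightarrow> 'a \<Rightarrow> nat \<Rightarrow> 'a" where
  "useq_pos \<alpha> u 0 = 1"
| "useq_pos \<alpha> u (Suc k) = useq_pos \<alpha> u k * (\<alpha> ^^ k) u"

fun useq_neg :: "('a::cstar_algebra \<Rightarrow> 'a) \<Rightarrow> 'a \<Rightarrow> nat \<Rightarrow> 'a" where
  "useq_neg \<alpha> u 0 = 1"
| "useq_neg \<alpha> u (Suc k) = useq_neg \<alpha> u k * (inv \<alpha> ^^ Suc k) (adj u)"

definition useq :: "('a::cstar_algebra \<Rightarrow> 'a) \<Rightarrow> 'a \<Rightarrow> int \<Rightarrow> 'a" where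
  "useq \<alpha> u n = (if 0 \<le> n then useq_pos \<alpha> u (nat n) else useq_neg \<alpha> u (nat (- n)))"

text \<open>'b together with iota (embedding of A), the unitary V and the conditional
  expectation E is (isomorphic to) the crossed product A \<rtimes>_alpha Z: iota is an injective
  unital *-homomorphism, V is a unitary implementing alpha, the polynomials
  sum iota(a_n) V^n are dense, and E is a continuous linear positive faithful map with
  E(iota(a) V^n) = delta_{n,0} a.  (Existence of such a faithful expectation identifies
  the generated C*-algebra with the reduced = full crossed product.)\<close>
definition crossed_product ::
  "('a::cstar_algebra \<Rightarrow> 'a) \<Rightarrow> ('a \<Rightarrow> 'b::cstar_algebra) \<Rightarrow> 'b \<Rightarrow> ('b \<Rightarrow> 'a) \<Rightarrow> bool" where
  "crossed_product \<alpha> \<iota> V E \<longleftrightarrow>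
     star_aut \<alpha> \<and> star_hom \<iota> \<and> inj \<iota> \<and> unitary V \<and>
     (\<forall>a. V * \<iota> a * adj V = \<iota> (\<alpha> a)) \<and>
     closure {\<Sum>n\<in>F. \<iota> (f n) * upow V n | F f. finite F} = UNIV \<and>
     clinear E \<and> continuous_on UNIV E \<and>
     (\<forall>a n. E (\<iota> a * upow V n) = (if n = 0 then a else 0)) \<and>
     (\<forall>b. positive (E (adj b * b))) \<and>
     (\<forall>b. E (adj b * b) = 0 \<longrightarrow> b = 0)"

definition bounded_clinear_op :: "('h::complex_normed_vector \<Rightarrow> 'h) \<Rightarrow> bool" where
  "bounded_clinear_op T \<longleftrightarrow> clinear T \<and> (\<exists>K. \<forall>x. norm (T x) \<le> K * norm x)"

definition unitary_op :: "('h::chilbert \<Rightarrow> 'h) \<Rightarrow> bool" where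
  "unitary_op W \<longleftrightarrow> bounded_clinear_op W \<and> bij W \<and> (\<forall>x y. cinner (W x) (W y) = cinner x y)"

definition representation :: "('b::cstar_algebra \<Rightarrow> 'h::chilbert \<Rightarrow> 'h) \<Rightarrow> bool" where
  "representation \<pi> \<longleftrightarrow>
     (\<forall>b. bounded_clinear_op (\<pi> b)) \<and>
     (\<forall>b c. \<pi> (b + c) = (\<lambda>x. \<pi> b x + \<pi> c x)) \<and>
     (\<forall>z b. \<pi> (scaleC z b) = (\<lambda>x. scaleC z (\<pi> b x))) \<and>
     (\<forall>b c. \<pi> (b * c) = \<pi> b \<circ> \<pi> c) \<and> \<pi> 1 = id \<and>
     (\<forall>b x y. cinner (\<pi> (adj b) x) y = cinner x (\<pi> b y))"

text \<open>(H, pi, W, xi) is the covariant GNS representation of the beta-invariant state phi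
  (unique up to unitary equivalence).\<close>
definition covariant_GNS ::
  "('b::cstar_algebra \<Rightarrow> complex) \<Rightarrow> ('b \<Rightarrow> 'b) \<Rightarrow> ('b \<Rightarrow> 'h::chilbert \<Rightarrow> 'h) \<Rightarrow> ('h \<Rightarrow> 'h) \<Rightarrow> 'h \<Rightarrow> bool" where
  "covariant_GNS \<phi> \<beta> \<pi> W \<xi> \<longleftrightarrow>
     representation \<pi> \<and> (\<forall>b. cinner \<xi> (\<pi> b \<xi>) = \<phi> b) \<and>
     closure (range (\<lambda>b. \<pi> b \<xi>)) = UNIV \<and>
     unitary_op W \<and> W \<xi> = \<xi> \<and> (\<forall>b. W (\<pi> b \<xi>) = \<pi> (\<beta> b) \<xi>)"

definition orth_proj :: "'h::chilbert set \<Rightarrow> 'h \<Rightarrow> 'h" where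
  "orth_proj S x = (THE p. p \<in> S \<and> (\<forall>s\<in>S. cinner s (x - p) = 0))"

definition E1 :: "('h::chilbert \<Rightarrow> 'h) \<Rightarrow> 'h \<Rightarrow> 'h" where
  "E1 T = orth_proj {\<eta>. T \<eta> = \<eta>}"

text \<open>E_1 of the restriction of T to an invariant closed subspace K, viewed as an operator
  on the whole space (zero on the orthogonal complement of K).\<close>
definition E1_on :: "'h::chilbert set \<Rightarrow> ('h \<Rightarrow> 'h) \<Rightarrow> 'h \<Rightarrow> 'h" where
  "E1_on K T = orth_proj {\<eta>\<in>K. T \<eta> = \<eta>}"

end

theory Submission
  imports Defs
begin

text \<open>The cyclic space of \<open>\<omega>\<close> is spanned by the vectors \<open>\<pi>(a V\<^sup>n) \<xi>\<close>, and since \<open>E\<close> kills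
  \<open>a V\<^sup>n\<close> for \<open>n \<noteq> 0\<close>, the subspaces \<open>\<pi>(V\<^sup>n) K\<close> are mutually orthogonal translates of
  \<open>K\<close>. Covariance together with \<open>\<Phi>(V\<^sup>n) = u\<^sub>n V\<^sup>n\<close> gives \<open>W \<pi>(V\<^sup>n) = \<pi>(V\<^sup>n) T\<^sub>n\<close>
  with \<open>T\<^sub>n = \<pi>(\<alpha>\<^sup>-\<^sup>n(u\<^sub>n)) W\<close>, and \<open>T\<^sub>n\<close> commutes with the projection onto \<open>K\<close>.
  So a \<open>W\<close>-fixed vector projects, after applying \<open>\<pi>(V\<^sup>-\<^sup>n)\<close>, onto a \<open>T\<^sub>n\<close>-fixed vector
  of \<open>K\<close>, and conversely a \<open>T\<^sub>n\<close>-fixed vector \<open>\<eta>\<close> of \<open>K\<close> gives the \<open>W\<close>-fixed vector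
  \<open>\<pi>(V\<^sup>n) \<eta>\<close>, orthogonal to \<open>K\<close>. Hence all fixed vectors of \<open>W\<close> lie in \<open>K\<close>, which
  is (i), iff (ii) holds. By the mean ergodic theorem a state is weakly clustering iff the fixed
  vectors of its GNS unitary are the multiples of \<open>\<xi>\<close>; when \<open>\<omega>\<^sub>o\<close> is weakly clustering
  this holds inside \<open>K\<close>, so \<open>\<omega>\<close> is weakly clustering iff again all fixed vectors lie in
  \<open>K\<close>.\<close>

section \<open>Complex inner product spaces\<close>

lemma scaleC_zero_right [simp]: "scaleC c (0::'a::complex_vector) = 0"
  by (metis add_cancel_right_right scaleC_add_right)

lemma scaleC_zero_left [simp]: "scaleC 0 (x::'a::complex_vector) = 0"
  by (metis add_0 add_cancel_right_right scaleC_add_left)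

lemma scaleC_minus_left: "scaleC (- c) (x::'a::complex_vector) = - scaleC c x"
  by (metis add.right_inverse eq_neg_iff_add_eq_0 scaleC_add_left scaleC_zero_left)

lemma scaleC_minus_right: "scaleC c (- x::'a::complex_vector) = - scaleC c x"
  by (metis add.right_inverse eq_neg_iff_add_eq_0 scaleC_add_right scaleC_zero_right)

lemma scaleC_diff_right: "scaleC c (x - y::'a::complex_vector) = scaleC c x - scaleC c y"
  by (metis diff_conv_add_uminus scaleC_add_right scaleC_minus_right)

lemma scaleC_sum_right: "scaleC c (sum f A) = (\<Sum>i\<in>A. scaleC c (f i::'a::complex_vector))"
  by (induction A rule: infinite_finite_induct) (auto simp: scaleC_add_right)

lemma cinner_add_right: "cinner x (y + z) = cinner x y + cinner (x::'a::complex_inner) z"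
  using cinner_commute[of x] cinner_add_left[of y z x] by simp

lemma cinner_scaleC_right: "cinner x (scaleC c y) = c * cinner (x::'a::complex_inner) y"
  using cinner_commute[of x] cinner_scaleC_left[of c y x] by simp

lemma cinner_zero_left [simp]: "cinner 0 (x::'a::complex_inner) = 0"
  using cinner_add_left[of 0 0 x] by simp

lemma cinner_zero_right [simp]: "cinner (x::'a::complex_inner) 0 = 0"
  using cinner_add_right[of x 0 0] by simp

lemma cinner_diff_left: "cinner (x - y) (z::'a::complex_inner) = cinner x z - cinner y z"
  using cinner_add_left[of "x - y" y z] by (simp add: algebra_simps)

lemma cinner_diff_right: "cinner x (y - z::'a::complex_inner) = cinner x y - cinner x z"
  using cinner_add_right[of x "y - z" z] by (simp add: algebra_simps)

lemma cinner_sum_left: "cinner (sum f A) x = (\<Sum>i\<in>A. cinner (f i) (x::'a::complex_inner))"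
  by (induction A rule: infinite_finite_induct) (auto simp: cinner_add_left)

lemma cinner_sum_right: "cinner x (sum f A) = (\<Sum>i\<in>A. cinner (x::'a::complex_inner) (f i))"
  by (induction A rule: infinite_finite_induct) (auto simp: cinner_add_right)

lemma cinner_scaleR_right: "cinner x (scaleR r y::'a::complex_inner) = of_real r * cinner x y"
  by (simp add: scaleR_scaleC cinner_scaleC_right)

lemma cinner_self: "cinner x (x::'a::complex_inner) = of_real ((norm x)\<^sup>2)"
proof -
  have "0 \<le> Re (cinner x x)"
    by (metis norm_eq_sqrt_cinner norm_ge_zero real_sqrt_ge_0_iff)
  then have "(norm x)\<^sup>2 = Re (cinner x x)"
    by (simp add: norm_eq_sqrt_cinner)
  then show ?thesis
    using cinner_self_real[of x] by (simp add: complex_eq_iff)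
qed

lemma power2_norm_eq_cinner: "(norm x)\<^sup>2 = Re (cinner x (x::'a::complex_inner))"
  by (simp add: cinner_self)

lemma cinner_self_eq_0 [simp]: "cinner x x = 0 \<longleftrightarrow> x = (0::'a::complex_inner)"
  by (simp add: cinner_self)

lemma cinner_expand_diff_scaleC:
  "cinner (x - scaleC t y) (x - scaleC t y) =
     cinner x x - t * cinner x y - cnj t * cinner y x + cnj t * t * cinner (y::'a::complex_inner) y"
  by (simp add: cinner_diff_left cinner_diff_right cinner_scaleC_left cinner_scaleC_right
      algebra_simps)

lemma norm_cinner_le: "cmod (cinner x y) \<le> norm x * norm (y::'a::complex_inner)"
proof (cases "y = 0")
  case False
  define N where "N = (norm y)\<^sup>2"
  define c where "c = cinner y x"
  have N: "N > 0"
    using False by (simp add: N_def)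
  have cc: "c * cnj c = of_real ((cmod c)\<^sup>2)"
    by (rule complex_norm_square[symmetric])
  \<comment> \<open>Expand \<open>\<parallel>x - (c/N) y\<parallel>\<^sup>2 \<ge> 0\<close>.\<close>
  have "cinner (x - scaleC (c / N) y) (x - scaleC (c / N) y) =
      of_real ((norm x)\<^sup>2 - (cmod c)\<^sup>2 / N)"
    unfolding cinner_expand_diff_scaleC
    using cc N by (simp add: cinner_self N_def c_def cinner_commute[of x y] field_simps)
  then have "(cmod c)\<^sup>2 / N \<le> (norm x)\<^sup>2"
    using power2_norm_eq_cinner[of "x - scaleC (c / N) y"]
      zero_le_power2[of "norm (x - scaleC (c / N) y)"] by simp
  then have "(cmod c)\<^sup>2 \<le> (norm x * norm y)\<^sup>2"
    using N by (simp add: field_simps N_def power_mult_distrib)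
  then have "cmod c \<le> norm x * norm y"
    by (simp add: power2_le_iff_abs_le)
  then show ?thesis
    by (metis c_def cinner_commute complex_mod_cnj)
qed simp

lemma bounded_bilinear_cinner: "bounded_bilinear (cinner :: 'a::complex_inner \<Rightarrow> 'a \<Rightarrow> complex)"
proof
  fix a a' b b' :: 'a and r :: real
  show "cinner (a + a') b = cinner a b + cinner a' b"
    by (rule cinner_add_left)
  show "cinner a (b + b') = cinner a b + cinner a b'"
    by (rule cinner_add_right)
  show "cinner (scaleR r a) b = scaleR r (cinner a b)"
    by (simp add: scaleR_scaleC cinner_scaleC_left scaleR_conv_of_real)
  show "cinner a (scaleR r b) = scaleR r (cinner a b)"
    by (simp add: cinner_scaleR_right scaleR_conv_of_real)
  show "\<exists>K. \<forall>a b. norm (cinner (a::'a) b) \<le> norm a * norm b * K"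
    by (rule exI[of _ 1]) (simp add: norm_cinner_le)
qed

lemmas tendsto_cinner = bounded_bilinear.tendsto[OF bounded_bilinear_cinner]
lemmas continuous_on_cinner = bounded_bilinear.continuous_on[OF bounded_bilinear_cinner]

lemma bounded_bilinear_scaleC:
  "bounded_bilinear (scaleC :: complex \<Rightarrow> 'a::complex_normed_vector \<Rightarrow> 'a)"
proof
  fix a a' :: complex and b b' :: 'a and r :: real
  show "scaleC (a + a') b = scaleC a b + scaleC a' b"
    by (rule scaleC_add_left)
  show "scaleC a (b + b') = scaleC a b + scaleC a b'"
    by (rule scaleC_add_right)
  show "scaleC (scaleR r a) b = scaleR r (scaleC a b)"
    by (simp add: scaleR_scaleC scaleC_scaleC scaleR_conv_of_real)
  show "scaleC a (scaleR r b) = scaleR r (scaleC a b)"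
    by (simp add: scaleR_scaleC scaleC_scaleC mult.commute)
  show "\<exists>K. \<forall>a b. norm (scaleC a (b::'a)) \<le> norm a * norm b * K"
    by (rule exI[of _ 1]) (simp add: norm_scaleC)
qed

lemma clinear_linear: "clinear f \<Longrightarrow> linear f"
  unfolding clinear_def by (auto intro!: linearI simp: scaleR_scaleC)

lemma clinear_0: "clinear f \<Longrightarrow> f 0 = 0"
  unfolding clinear_def by (metis scaleC_zero_left)

lemma clinear_diff: "clinear f \<Longrightarrow> f (x - y) = f x - f y"
  unfolding clinear_def by (metis diff_add_cancel add_diff_cancel_right')

lemma clinear_funpow: "clinear (f::'a::complex_vector \<Rightarrow> 'a) \<Longrightarrow> clinear (f ^^ k)"
  by (induction k) (simp_all add: clinear_def)

lemma bounded_clinear_op_bounded_linear: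
  assumes "bounded_clinear_op T"
  shows "bounded_linear T"
proof -
  obtain K where K: "\<And>x. norm (T x) \<le> K * norm x" and "clinear T"
    using assms unfolding bounded_clinear_op_def by blast
  from \<open>clinear T\<close> have "linear T"
    by (rule clinear_linear)
  with K show ?thesis
    by (auto intro!: bounded_linear_intro[where K=K] simp: linear_add linear_scale mult.commute)
qed

section \<open>Closed subspaces and orthogonal projections\<close>

definition csubspace :: "'a::complex_vector set \<Rightarrow> bool" where
  "csubspace S \<longleftrightarrow> 0 \<in> S \<and> (\<forall>x\<in>S. \<forall>y\<in>S. x + y \<in> S) \<and> (\<forall>c. \<forall>x\<in>S. scaleC c x \<in> S)"

lemma csubspace_diff: "csubspace S \<Longrightarrow> x \<in> S \<Longrightarrow> y \<in> S \<Longrightarrow> x - y \<in> S"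
  unfolding csubspace_def by (metis diff_conv_add_uminus scaleC_minus_left scaleC_one)

lemma csubspace_Int: "csubspace S \<Longrightarrow> csubspace T \<Longrightarrow> csubspace (S \<inter> T)"
  unfolding csubspace_def by blast

lemma csubspace_closure:
  fixes S :: "'a::complex_normed_vector set"
  assumes S: "csubspace S"
  shows "csubspace (closure S)"
  unfolding csubspace_def
proof (intro conjI ballI allI)
  show "0 \<in> closure S"
    using S closure_subset unfolding csubspace_def by blast
next
  fix x y assume "x \<in> closure S" "y \<in> closure S"
  then obtain f g where f: "\<forall>n. f n \<in> S" "f \<longlonglongrightarrow> x" and g: "\<forall>n. g n \<in> S" "g \<longlonglongrightarrow> y"
    unfolding closure_sequential by blast
  have "\<forall>n. f n + g n \<in> S"
    using f g S unfolding csubspace_def by blast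
  moreover have "(\<lambda>n. f n + g n) \<longlonglongrightarrow> x + y"
    using f g by (intro tendsto_add) auto
  ultimately show "x + y \<in> closure S"
    unfolding closure_sequential by (intro exI[where x="\<lambda>n. f n + g n"]) simp
next
  fix c x assume "x \<in> closure S"
  then obtain f where f: "\<forall>n. f n \<in> S" "f \<longlonglongrightarrow> x"
    unfolding closure_sequential by blast
  have "\<forall>n. scaleC c (f n) \<in> S"
    using f S unfolding csubspace_def by blast
  moreover have "(\<lambda>n. scaleC c (f n)) \<longlonglongrightarrow> scaleC c x"
    using f by (intro bounded_bilinear.tendsto[OF bounded_bilinear_scaleC]) auto
  ultimately show "scaleC c x \<in> closure S"
    unfolding closure_sequential by (intro exI[where x="\<lambda>n. scaleC c (f n)"]) simp
qed

lemma csubspace_fixed_points: "clinear T \<Longrightarrow> csubspace {x. T x = x}"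
  unfolding csubspace_def by (auto simp: clinear_0 clinear_def)

lemma closed_fixed_points: "bounded_linear T \<Longrightarrow> closed {x. T x = x}"
  by (intro closed_Collect_eq linear_continuous_on continuous_on_id)

lemma parallelogram_law:
  "(norm (a + b))\<^sup>2 + (norm (a - b))\<^sup>2 = 2 * (norm a)\<^sup>2 + 2 * (norm (b::'a::complex_inner))\<^sup>2"
  unfolding power2_norm_eq_cinner
  by (simp add: cinner_add_left cinner_add_right cinner_diff_left cinner_diff_right)

lemma midpoint_distance_estimate:
  fixes x a b :: "'a::complex_inner"
  assumes "d \<le> norm (x - scaleR (1/2) (a + b))" and "0 \<le> d"
  shows "(norm (a - b))\<^sup>2 \<le> 2 * (norm (x - a))\<^sup>2 + 2 * (norm (x - b))\<^sup>2 - 4 * d\<^sup>2"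
proof -
  have "(x - a) + (x - b) = scaleR 2 (x - scaleR (1/2) (a + b))"
    by (simp add: algebra_simps scaleR_2)
  then have "2 * d \<le> norm ((x - a) + (x - b))"
    using assms(1) by simp
  then have "(2 * d)\<^sup>2 \<le> (norm ((x - a) + (x - b)))\<^sup>2"
    using assms(2) by (intro power_mono) auto
  with parallelogram_law[of "x - a" "x - b"] show ?thesis
    by (simp add: power_mult_distrib norm_minus_commute)
qed

lemma minimizing_sequence_Cauchy:
  fixes x :: "'a::complex_inner"
  assumes S: "csubspace S" and s: "\<And>n. s n \<in> S"
    and d_le: "\<And>q. q \<in> S \<Longrightarrow> d \<le> norm (x - q)" and d0: "0 \<le> d"
    and sd: "\<And>n. (norm (x - s n))\<^sup>2 < d\<^sup>2 + 1 / (real n + 1)"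
  shows "Cauchy s"
proof (rule metric_CauchyI)
  fix e :: real assume e: "0 < e"
  obtain N :: nat where N: "4 / e\<^sup>2 < real N"
    using reals_Archimedean2 by blast
  have small: "2 / (real n + 1) < e\<^sup>2 / 2" if "N \<le> n" for n
  proof -
    have "4 / e\<^sup>2 < real n + 1"
      using N that by linarith
    then show ?thesis
      using e by (simp add: field_simps)
  qed
  have midpoint: "scaleR (1/2) (s m + s n) \<in> S" for m n
    using S s unfolding csubspace_def scaleR_scaleC by blast
  have "dist (s m) (s n) < e" if "N \<le> m" "N \<le> n" for m n
  proof -
    have "(norm (s m - s n))\<^sup>2 \<le> 2 * (norm (x - s m))\<^sup>2 + 2 * (norm (x - s n))\<^sup>2 - 4 * d\<^sup>2"
      by (rule midpoint_distance_estimate[OF d_le[OF midpoint] d0])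
    also have "\<dots> < e\<^sup>2"
      using sd[of m] sd[of n] small[OF \<open>N \<le> m\<close>] small[OF \<open>N \<le> n\<close>] by linarith
    finally show ?thesis
      using e by (simp add: dist_norm power_less_imp_less_base)
  qed
  then show "\<exists>M. \<forall>m\<ge>M. \<forall>n\<ge>M. dist (s m) (s n) < e"
    by blast
qed

lemma closed_csubspace_nearest_point:
  fixes S :: "'a::chilbert set"
  assumes S: "csubspace S" and cl: "closed S"
  shows "\<exists>p\<in>S. \<forall>q\<in>S. norm (x - p) \<le> norm (x - q)"
proof -
  define d where "d = Inf ((\<lambda>s. norm (x - s)) ` S)"
  have ne: "(\<lambda>s. norm (x - s)) ` S \<noteq> {}"
    using S unfolding csubspace_def by blast
  have d_le: "d \<le> norm (x - s)" if "s \<in> S" for s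
    unfolding d_def by (rule cInf_lower) (use that in \<open>auto intro: bdd_belowI[of _ 0]\<close>)
  have d0: "0 \<le> d"
    unfolding d_def using ne by (intro cInf_greatest) auto
  have "\<exists>s\<in>S. (norm (x - s))\<^sup>2 < d\<^sup>2 + 1 / (real n + 1)" for n
  proof -
    have "d < sqrt (d\<^sup>2 + 1 / (real n + 1))"
      by (rule real_less_rsqrt) simp
    then obtain s where s: "s \<in> S" "norm (x - s) < sqrt (d\<^sup>2 + 1 / (real n + 1))"
      using cInf_lessD[OF ne] unfolding d_def by blast
    then have "(norm (x - s))\<^sup>2 < d\<^sup>2 + 1 / (real n + 1)"
      by (metis norm_ge_zero real_sqrt_less_iff real_sqrt_abs abs_norm_cancel power2_less_imp_less
          real_less_rsqrt)
    with s show ?thesis by blast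
  qed
  then obtain s where sS: "\<And>n. s n \<in> S" and sd: "\<And>n. (norm (x - s n))\<^sup>2 < d\<^sup>2 + 1 / (real n + 1)"
    by metis
  then have "Cauchy s"
    using minimizing_sequence_Cauchy[OF S _ d_le d0] by blast
  then obtain p where p: "s \<longlonglongrightarrow> p"
    using Cauchy_convergent_iff convergent_def by blast
  have pS: "p \<in> S"
    using cl sS p closed_sequentially by blast
  have "(\<lambda>n. (norm (x - s n))\<^sup>2) \<longlonglongrightarrow> (norm (x - p))\<^sup>2"
    by (intro tendsto_intros p)
  moreover have "(\<lambda>n. d\<^sup>2 + 1 / (real n + 1)) \<longlonglongrightarrow> d\<^sup>2 + 0"
    using LIMSEQ_inverse_real_of_nat by (intro tendsto_intros) (simp add: inverse_eq_divide add.commute)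
  ultimately have "(norm (x - p))\<^sup>2 \<le> d\<^sup>2"
    using sd by (intro LIMSEQ_le) (auto intro: less_imp_le)
  then have "norm (x - p) \<le> d"
    using d0 by (simp add: power2_le_iff_abs_le)
  with pS d_le show ?thesis
    by force
qed

lemma nearest_point_orthogonal:
  fixes S :: "'a::complex_inner set"
  assumes S: "csubspace S" and p: "p \<in> S" and nearest: "\<forall>q\<in>S. norm (x - p) \<le> norm (x - q)"
    and s: "s \<in> S"
  shows "cinner s (x - p) = 0"
proof -
  define w where "w = x - p"
  define c where "c = cinner s w"
  define r where "r = 1 / ((norm s)\<^sup>2 + 1)"
  define t where "t = of_real r * c"
  have r0: "0 < r" and r1: "r * (norm s)\<^sup>2 < 1"
    unfolding r_def by (simp_all add: add_nonneg_pos add_pos_nonneg field_simps)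
  have cc: "c * cnj c = of_real ((cmod c)\<^sup>2)"
    by (rule complex_norm_square[symmetric])
  \<comment> \<open>Moving from \<open>p\<close> to \<open>p + t s\<close> would decrease the distance unless \<open>c = 0\<close>.\<close>
  have "p + scaleC t s \<in> S"
    using S p s unfolding csubspace_def by blast
  then have "(norm w)\<^sup>2 \<le> (norm (w - scaleC t s))\<^sup>2"
    using nearest unfolding w_def by (metis diff_diff_eq norm_ge_zero power_mono)
  also have "cinner (w - scaleC t s) (w - scaleC t s) =
      of_real ((norm w)\<^sup>2 - 2 * r * (cmod c)\<^sup>2 + r\<^sup>2 * (cmod c)\<^sup>2 * (norm s)\<^sup>2)"
    unfolding cinner_expand_diff_scaleC using cc
    by (simp add: t_def c_def cinner_commute[of w s] cinner_self power2_eq_square algebra_simps)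
  then have "(norm (w - scaleC t s))\<^sup>2 = (norm w)\<^sup>2 - 2 * r * (cmod c)\<^sup>2 + r\<^sup>2 * (cmod c)\<^sup>2 * (norm s)\<^sup>2"
    by (simp add: power2_norm_eq_cinner)
  finally have "0 \<le> r * (cmod c)\<^sup>2 * (r * (norm s)\<^sup>2 - 2)"
    by (simp add: algebra_simps power2_eq_square)
  with r1 have "\<not> 0 < r * (cmod c)\<^sup>2"
    by (smt (verit) mult_pos_neg)
  with r0 have "c = 0"
    by (simp add: zero_less_mult_iff)
  then show ?thesis
    by (simp add: c_def w_def)
qed

lemma orth_proj_eq:
  fixes x p :: "'a::chilbert"
  assumes S: "csubspace S" and p: "p \<in> S" and orth: "\<forall>s\<in>S. cinner s (x - p) = 0"
  shows "orth_proj S x = p"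
  unfolding orth_proj_def
proof (rule the_equality)
  fix q assume q: "q \<in> S \<and> (\<forall>s\<in>S. cinner s (x - q) = 0)"
  have "p - q \<in> S"
    using csubspace_diff[OF S] p q by blast
  moreover have "cinner (p - q) (x - q) - cinner (p - q) (x - p) = cinner (p - q) (p - q)"
    by (simp add: cinner_diff_right)
  ultimately have "cinner (p - q) (p - q) = 0"
    using q orth by simp
  then show "q = p"
    by simp
qed (use p orth in blast)

lemma orth_proj_id: "csubspace S \<Longrightarrow> x \<in> S \<Longrightarrow> orth_proj S x = (x::'a::chilbert)"
  by (rule orth_proj_eq) auto

lemma orth_proj:
  fixes S :: "'a::chilbert set"
  assumes S: "csubspace S" and cl: "closed S"
  shows "orth_proj S x \<in> S" and "\<forall>s\<in>S. cinner s (x - orth_proj S x) = 0"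
proof -
  obtain p where p: "p \<in> S" "\<forall>q\<in>S. norm (x - p) \<le> norm (x - q)"
    using closed_csubspace_nearest_point[OF S cl] by blast
  then have orth: "\<forall>s\<in>S. cinner s (x - p) = 0"
    using nearest_point_orthogonal[OF S] by blast
  then have "orth_proj S x = p"
    by (rule orth_proj_eq[OF S p(1)])
  with p(1) orth show "orth_proj S x \<in> S" and "\<forall>s\<in>S. cinner s (x - orth_proj S x) = 0"
    by simp_all
qed

lemma orth_proj_Int_eq_iff:
  fixes K F :: "'a::chilbert set"
  assumes K: "csubspace K" "closed K" and F: "csubspace F" "closed F"
  shows "orth_proj (K \<inter> F) = orth_proj F \<longleftrightarrow> F \<subseteq> K"
proof
  assume eq: "orth_proj (K \<inter> F) = orth_proj F"
  show "F \<subseteq> K"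
  proof
    fix x assume "x \<in> F"
    then have "orth_proj F x = x"
      by (rule orth_proj_id[OF F(1)])
    moreover have "orth_proj (K \<inter> F) x \<in> K"
      using orth_proj(1)[OF csubspace_Int[OF K(1) F(1)]] K(2) F(2) by blast
    ultimately show "x \<in> K"
      using eq by simp
  qed
qed (simp add: Int_absorb1)

lemma orth_proj_commute:
  fixes A A' :: "'a::chilbert \<Rightarrow> 'a"
  assumes K: "csubspace K" "closed K" and A: "clinear A"
    and AK: "\<And>k. k \<in> K \<Longrightarrow> A k \<in> K" and A'K: "\<And>k. k \<in> K \<Longrightarrow> A' k \<in> K"
    and adjoint: "\<And>v w. cinner (A' v) w = cinner v (A w)"
  shows "orth_proj K (A z) = A (orth_proj K z)"
proof (rule orth_proj_eq[OF K(1)])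
  show "A (orth_proj K z) \<in> K"
    using AK orth_proj(1)[OF K] by blast
  show "\<forall>s\<in>K. cinner s (A z - A (orth_proj K z)) = 0"
  proof
    fix s assume "s \<in> K"
    then have "cinner (A' s) (z - orth_proj K z) = 0"
      using orth_proj(2)[OF K] A'K by blast
    then show "cinner s (A z - A (orth_proj K z)) = 0"
      by (simp add: clinear_diff[OF A, symmetric] adjoint)
  qed
qed

lemma continuous_eq_on_closure:
  assumes "continuous_on UNIV f" and "continuous_on UNIV g"
    and "\<And>s. s \<in> S \<Longrightarrow> f s = (g s :: 'b::t2_space)" and "x \<in> closure S"
  shows "f x = g x"
proof -
  have "closure S \<subseteq> {x. f x = g x}"
    using assms(3) by (intro closure_minimal closed_Collect_eq assms(1,2)) blast
  with assms(4) show ?thesis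
    by blast
qed

section \<open>Unitary operators and the mean ergodic theorem\<close>

lemma csubspace_range: "clinear f \<Longrightarrow> csubspace (range f)"
  unfolding csubspace_def clinear_def
  by (metis (no_types, lifting) rangeE rangeI scaleC_zero_left)

lemma unitary_op_clinear: "unitary_op W \<Longrightarrow> clinear W"
  unfolding unitary_op_def bounded_clinear_op_def by blast

lemma unitary_op_bounded_linear: "unitary_op W \<Longrightarrow> bounded_linear W"
  unfolding unitary_op_def by (blast intro: bounded_clinear_op_bounded_linear)

lemma unitary_op_cinner: "unitary_op W \<Longrightarrow> cinner (W x) (W y) = cinner x y"
  unfolding unitary_op_def by blast

lemma unitary_op_norm: "unitary_op W \<Longrightarrow> norm (W x) = norm x"
  by (simp add: norm_eq_sqrt_cinner unitary_op_cinner)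

lemma unitary_op_funpow_norm: "unitary_op W \<Longrightarrow> norm ((W ^^ k) x) = norm x"
  by (induction k) (auto simp: unitary_op_norm)

lemma unitary_op_funpow_cinner: "unitary_op W \<Longrightarrow> cinner ((W ^^ k) x) ((W ^^ k) y) = cinner x y"
  by (induction k) (auto simp: unitary_op_cinner)

lemma funpow_fixed: "W x = x \<Longrightarrow> (W ^^ k) x = x"
  by (induction k) auto

lemma unitary_op_inv:
  fixes W :: "'a::chilbert \<Rightarrow> 'a"
  assumes W: "unitary_op W"
  shows "W (inv W x) = x" and "inv W (W x) = x" and "cinner (inv W v) w = cinner v (W w)"
    and "clinear (inv W)" and "bounded_linear (inv W)"
proof -
  have "bij W"
    using W unfolding unitary_op_def by blast
  then show WW': "W (inv W x) = x" and W'W: "inv W (W x) = x" for x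
    by (simp_all add: bij_is_surj surj_f_inv_f bij_is_inj)
  show "cinner (inv W v) w = cinner v (W w)"
    using unitary_op_cinner[OF W, of "inv W v" w] by (simp add: WW')
  have "clinear W"
    by (rule unitary_op_clinear[OF W])
  then show lin: "clinear (inv W)"
    unfolding clinear_def
  proof (intro conjI allI)
    assume l: "(\<forall>x y. W (x + y) = W x + W y) \<and> (\<forall>c x. W (scaleC c x) = scaleC c (W x))"
    show "inv W (x + y) = inv W x + inv W y" for x y
      using l W'W[of "inv W x + inv W y"] by (simp add: WW')
    show "inv W (scaleC c x) = scaleC c (inv W x)" for c x
      using l W'W[of "scaleC c (inv W x)"] by (simp add: WW')
  qed
  show "bounded_linear (inv W)"
  proof (rule bounded_linear_intro[where K=1])
    show "inv W (x + y) = inv W x + inv W y" for x y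
      using lin unfolding clinear_def by blast
    show "inv W (scaleR r x) = scaleR r (inv W x)" for r x
      using lin unfolding clinear_def by (simp add: scaleR_scaleC)
    show "norm (inv W x) \<le> norm x * 1" for x
      using unitary_op_norm[OF W, of "inv W x"] by (simp add: WW')
  qed
qed

definition ergodic_avg :: "('a::complex_vector \<Rightarrow> 'a) \<Rightarrow> nat \<Rightarrow> 'a \<Rightarrow> 'a" where
  "ergodic_avg W n y = scaleR (1 / real n) (\<Sum>k<n. (W ^^ k) y)"

lemma ergodic_avg_clinear:
  assumes W: "clinear W"
  shows "clinear (ergodic_avg W n)"
proof -
  have p: "\<And>k. clinear (W ^^ k)"
    by (rule clinear_funpow[OF W])
  show ?thesis
    unfolding clinear_def ergodic_avg_def
  proof (intro conjI allI)
    show "scaleR (1 / real n) (\<Sum>k<n. (W ^^ k) (x + y)) =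
      scaleR (1 / real n) (\<Sum>k<n. (W ^^ k) x) + scaleR (1 / real n) (\<Sum>k<n. (W ^^ k) y)" for x y
      using p by (simp add: clinear_def sum.distrib scaleR_add_right)
    show "scaleR (1 / real n) (\<Sum>k<n. (W ^^ k) (scaleC c x)) =
      scaleC c (scaleR (1 / real n) (\<Sum>k<n. (W ^^ k) x))" for c x
      using p by (simp add: clinear_def scaleC_sum_right[symmetric] scaleR_scaleC scaleC_scaleC
          mult.commute)
  qed
qed

lemma norm_ergodic_avg_le: "unitary_op W \<Longrightarrow> norm (ergodic_avg W n y) \<le> norm y"
proof -
  assume W: "unitary_op W"
  have "norm (\<Sum>k<n. (W ^^ k) y) \<le> (\<Sum>k<n. norm ((W ^^ k) y))"
    by (rule norm_sum)
  also have "\<dots> = real n * norm y"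
    by (simp add: unitary_op_funpow_norm[OF W])
  finally show ?thesis
    by (cases "n = 0") (simp_all add: ergodic_avg_def field_simps)
qed

lemma ergodic_avg_fixed: "W f = f \<Longrightarrow> n \<noteq> 0 \<Longrightarrow> ergodic_avg W n f = f"
  by (simp add: ergodic_avg_def funpow_fixed sum_constant_scaleR)

lemma cinner_fixed_ergodic_avg:
  assumes "unitary_op W" and "W x = x" and "n \<noteq> 0"
  shows "cinner x (ergodic_avg W n y) = cinner x y"
proof -
  have "cinner x ((W ^^ k) y) = cinner x y" for k
    using unitary_op_funpow_cinner[OF assms(1), of k x y] funpow_fixed[of W x k] assms(2) by simp
  with assms(3) show ?thesis
    by (simp add: ergodic_avg_def cinner_scaleR_right cinner_sum_right)
qed

lemma cinner_fixed_ergodic_avg_tendsto: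
  assumes "unitary_op W" and "W x = x"
  shows "(\<lambda>n. cinner x (ergodic_avg W n y)) \<longlonglongrightarrow> cinner x y"
  using assms
  by (intro tendsto_eventually eventually_sequentiallyI[of 1]) (simp add: cinner_fixed_ergodic_avg)

lemma unitary_op_fixed_if_orthogonal:
  assumes W: "unitary_op W" and orth: "cinner (f - W f) f = 0"
  shows "W f = f"
proof -
  have "cinner (W f) f = cinner f f"
    using orth by (simp add: cinner_diff_left)
  moreover from this have "cinner f (W f) = cinner f f"
    using cinner_commute[of f "W f"] cinner_commute[of f f] by simp
  ultimately have "cinner (W f - f) (W f - f) = 0"
    by (simp add: cinner_diff_left cinner_diff_right unitary_op_cinner[OF W])
  then show ?thesis
    by simp
qed

lemma ergodic_avg_coboundary_tendsto_0:
  assumes W: "unitary_op W"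
  shows "(\<lambda>n. ergodic_avg W n (z - W z)) \<longlonglongrightarrow> 0"
proof (rule Lim_null_comparison)
  have lin: "clinear (W ^^ k)" for k
    by (rule clinear_funpow[OF unitary_op_clinear[OF W]])
  have telescope: "(\<Sum>k<n. (W ^^ k) (z - W z)) = z - (W ^^ n) z" for n
    by (induction n) (simp_all add: clinear_diff[OF lin] funpow_swap1)
  have "norm (z - (W ^^ n) z) \<le> 2 * norm z" for n
    using norm_triangle_ineq4[of z "(W ^^ n) z"] by (simp add: unitary_op_funpow_norm[OF W])
  then show "\<forall>\<^sub>F n in sequentially. norm (ergodic_avg W n (z - W z)) \<le> 1 / real n * (2 * norm z)"
    by (intro always_eventually allI) (simp add: ergodic_avg_def telescope divide_right_mono)
  show "(\<lambda>n. 1 / real n * (2 * norm z)) \<longlonglongrightarrow> 0"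
    by (intro tendsto_mult_left_zero lim_1_over_n)
qed

lemma ergodic_avg_tendsto_0_closure:
  assumes W: "unitary_op W"
    and S: "\<And>s. s \<in> S \<Longrightarrow> (\<lambda>n. ergodic_avg W n s) \<longlonglongrightarrow> 0" and m: "m \<in> closure S"
  shows "(\<lambda>n. ergodic_avg W n m) \<longlonglongrightarrow> 0"
proof (rule LIMSEQ_I)
  fix e :: real assume "0 < e"
  then have e2: "0 < e / 2"
    by simp
  then obtain s where s: "s \<in> S" "dist s m < e / 2"
    using m unfolding closure_approachable by blast
  obtain N where N: "\<forall>n\<ge>N. norm (ergodic_avg W n s) < e / 2"
    using S[OF s(1)] e2 unfolding LIMSEQ_def dist_norm by (metis diff_zero)
  have "norm (ergodic_avg W n m) < e" if "N \<le> n" for n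
  proof -
    have "ergodic_avg W n m = ergodic_avg W n s + ergodic_avg W n (m - s)"
      using clinear_diff[OF ergodic_avg_clinear[OF unitary_op_clinear[OF W]]] by simp
    then have "norm (ergodic_avg W n m) \<le> norm (ergodic_avg W n s) + norm (ergodic_avg W n (m - s))"
      by (simp add: norm_triangle_ineq)
    also have "\<dots> \<le> norm (ergodic_avg W n s) + norm (m - s)"
      using norm_ergodic_avg_le[OF W] by (rule add_left_mono)
    finally have "norm (ergodic_avg W n m) \<le> norm (ergodic_avg W n s) + norm (m - s)" .
    moreover have "norm (ergodic_avg W n s) < e / 2"
      using N that by blast
    ultimately show ?thesis
      using s(2) by (simp add: dist_norm norm_minus_commute)
  qed
  then show "\<exists>N. \<forall>n\<ge>N. norm (ergodic_avg W n m - 0) < e"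
    by auto
qed

text \<open>Von Neumann: \<open>y\<close> splits into its projection onto the closure of \<open>range (I - W)\<close>, whose
  averages tend to \<open>0\<close>, and a remainder orthogonal to \<open>range (I - W)\<close>, which is fixed.\<close>
theorem mean_ergodic:
  fixes W :: "'a::chilbert \<Rightarrow> 'a"
  assumes W: "unitary_op W"
  shows "\<exists>f. W f = f \<and> (\<lambda>n. ergodic_avg W n y) \<longlonglongrightarrow> f"
proof -
  define M where "M = closure (range (\<lambda>z. z - W z))"
  have lin: "clinear W"
    by (rule unitary_op_clinear[OF W])
  then have "clinear (\<lambda>z. z - W z)"
    by (simp add: clinear_def scaleC_diff_right)
  then have M: "csubspace M" "closed M"
    unfolding M_def by (simp_all add: csubspace_closure[OF csubspace_range])
  define p where "p = orth_proj M y"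
  define f where "f = y - p"
  have "f - W f \<in> M"
    unfolding M_def by (rule closure_subset[THEN subsetD]) (rule rangeI)
  with orth_proj(2)[OF M, of y] have "cinner (f - W f) f = 0"
    unfolding f_def p_def by blast
  then have Wf: "W f = f"
    by (rule unitary_op_fixed_if_orthogonal[OF W])
  have "p \<in> M"
    unfolding p_def by (rule orth_proj(1)[OF M])
  then have "(\<lambda>n. ergodic_avg W n p) \<longlonglongrightarrow> 0"
    unfolding M_def
    by (rule ergodic_avg_tendsto_0_closure[OF W, rotated]) (auto intro: ergodic_avg_coboundary_tendsto_0[OF W])
  then have "(\<lambda>n. f + ergodic_avg W n p) \<longlonglongrightarrow> f + 0"
    by (intro tendsto_add tendsto_const)
  moreover have "ergodic_avg W n y = f + ergodic_avg W n p" if "n \<noteq> 0" for n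
  proof -
    have "ergodic_avg W n (f + p) = ergodic_avg W n f + ergodic_avg W n p"
      using ergodic_avg_clinear[OF lin, of n] unfolding clinear_def by blast
    with ergodic_avg_fixed[of W f n, OF Wf that] show ?thesis
      by (simp add: f_def)
  qed
  then have "\<forall>\<^sub>F n in sequentially. f + ergodic_avg W n p = ergodic_avg W n y"
    by (intro eventually_sequentiallyI[of 1]) auto
  ultimately have "(\<lambda>n. ergodic_avg W n y) \<longlonglongrightarrow> f"
    by (simp add: Lim_transform_eventually)
  with Wf show ?thesis
    by blast
qed

lemma tendsto_cinner_closure:
  fixes a :: "nat \<Rightarrow> 'a::complex_inner"
  assumes bnd: "\<And>n. norm (a n) \<le> C"
    and D: "\<And>v. v \<in> D \<Longrightarrow> (\<lambda>n. cinner v (a n)) \<longlonglongrightarrow> cinner v g"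
    and x: "x \<in> closure D"
  shows "(\<lambda>n. cinner x (a n)) \<longlonglongrightarrow> cinner x g"
proof (rule LIMSEQ_I)
  fix e :: real assume e: "0 < e"
  define B where "B = C + norm g + 1"
  have B: "0 < B"
    unfolding B_def using bnd[of 0] by (smt (verit) norm_ge_zero)
  then obtain v where v: "v \<in> D" "dist v x < e / (2 * B)"
    using x e unfolding closure_approachable by (metis divide_pos_pos mult_pos_pos zero_less_numeral)
  have "0 < e / 2"
    using e by simp
  then obtain N where N: "\<forall>n\<ge>N. norm (cinner v (a n) - cinner v g) < e / 2"
    using D[OF v(1)] unfolding LIMSEQ_def dist_norm by blast
  have "norm (cinner x (a n) - cinner x g) < e" if "N \<le> n" for n
  proof -
    have "norm (cinner (x - v) (a n)) + norm (cinner (x - v) g) \<le> norm (x - v) * C + norm (x - v) * norm g"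
      using norm_cinner_le[of "x - v" "a n"] norm_cinner_le[of "x - v" g]
        mult_left_mono[OF bnd[of n] norm_ge_zero[of "x - v"]] by simp
    also have "\<dots> \<le> norm (x - v) * B"
      unfolding B_def by (simp add: algebra_simps)
    also have "\<dots> < e / 2"
      using v B by (simp add: dist_norm norm_minus_commute field_simps)
    finally have "norm (cinner (x - v) (a n)) + norm (cinner (x - v) g) < e / 2" .
    moreover have "cinner x (a n) - cinner x g =
        cinner (x - v) (a n) + (cinner v (a n) - cinner v g) - cinner (x - v) g"
      by (simp add: cinner_diff_left)
    then have "norm (cinner x (a n) - cinner x g) \<le>
        norm (cinner (x - v) (a n)) + norm (cinner v (a n) - cinner v g) + norm (cinner (x - v) g)"
      by (metis norm_triangle_ineq norm_triangle_ineq4 add_right_mono order_trans)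
    ultimately show ?thesis
      using N that by fastforce
  qed
  then show "\<exists>N. \<forall>n\<ge>N. norm (cinner x (a n) - cinner x g) < e"
    by blast
qed

lemma fixed_vector_eq_multiple:
  fixes W :: "'h::chilbert \<Rightarrow> 'h"
  assumes W: "unitary_op W" and Wx: "W x = x"
    and x: "x \<in> closure (range f)" and \<xi>: "\<xi> \<in> closure (range f)"
    and lim: "\<And>b c. (\<lambda>n. cinner (f c) (ergodic_avg W n (f b))) \<longlonglongrightarrow> cinner (f c) \<xi> * cinner \<xi> (f b)"
  shows "x = scaleC (cinner \<xi> x) \<xi>"
proof -
  have key: "cinner x (f b) = cinner \<xi> (f b) * cinner x \<xi>" for b
  proof -
    have "(\<lambda>n. cinner x (ergodic_avg W n (f b))) \<longlonglongrightarrow> cinner x (scaleC (cinner \<xi> (f b)) \<xi>)"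
    proof (rule tendsto_cinner_closure[OF norm_ergodic_avg_le[OF W] _ x])
      fix v assume "v \<in> range f"
      then show "(\<lambda>n. cinner v (ergodic_avg W n (f b))) \<longlonglongrightarrow> cinner v (scaleC (cinner \<xi> (f b)) \<xi>)"
        using lim by (auto simp: cinner_scaleC_right mult.commute)
    qed
    moreover have "(\<lambda>n. cinner x (ergodic_avg W n (f b))) \<longlonglongrightarrow> cinner x (f b)"
      by (rule cinner_fixed_ergodic_avg_tendsto[OF W Wx])
    ultimately show ?thesis
      using LIMSEQ_unique by (fastforce simp: cinner_scaleC_right)
  qed
  define z where "z = x - scaleC (cinner \<xi> x) \<xi>"
  have "cinner z (f b) = 0" for b
    using key[of b] cinner_commute[of x \<xi>]
    by (simp add: z_def cinner_diff_left cinner_scaleC_left mult.commute)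
  then have "range f \<subseteq> {y. cinner z y = 0}"
    by blast
  moreover have "closed {y. cinner z y = 0}"
    by (intro closed_Collect_eq continuous_on_cinner continuous_on_const continuous_on_id)
  ultimately have "closure (range f) \<subseteq> {y. cinner z y = 0}"
    by (rule closure_minimal)
  with x \<xi> have "cinner z x = 0" "cinner z \<xi> = 0"
    by auto
  then have "cinner z z = 0"
    by (simp add: z_def[of] cinner_diff_right cinner_scaleC_right)
  then show ?thesis
    by (simp add: z_def)
qed

lemma tendsto_cinner_ergodic_avg:
  fixes W :: "'h::chilbert \<Rightarrow> 'h"
  assumes W: "unitary_op W" and W\<xi>: "W \<xi> = \<xi>"
    and fixed: "\<forall>x. W x = x \<longrightarrow> x = scaleC (cinner \<xi> x) \<xi>"
  shows "(\<lambda>n. cinner v (ergodic_avg W n y)) \<longlonglongrightarrow> cinner v \<xi> * cinner \<xi> y"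
proof -
  obtain f where f: "W f = f" "(\<lambda>n. ergodic_avg W n y) \<longlonglongrightarrow> f"
    using mean_ergodic[OF W] by blast
  have "(\<lambda>n. cinner \<xi> (ergodic_avg W n y)) \<longlonglongrightarrow> cinner \<xi> f"
    by (intro tendsto_cinner tendsto_const f(2))
  with cinner_fixed_ergodic_avg_tendsto[OF W W\<xi>] have "cinner \<xi> f = cinner \<xi> y"
    using LIMSEQ_unique by blast
  then have "cinner v f = cinner v \<xi> * cinner \<xi> y"
    using fixed f(1) by (metis cinner_scaleC_right mult.commute)
  moreover have "(\<lambda>n. cinner v (ergodic_avg W n y)) \<longlonglongrightarrow> cinner v f"
    by (intro tendsto_cinner tendsto_const f(2))
  ultimately show ?thesis
    by simp
qed

section \<open>C*-algebras and states\<close>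

instance cstar_algebra \<subseteq> banach ..

lemma adj_zero [simp]: "adj (0::'a::cstar_algebra) = 0"
  using adj_add[of 0 0] by simp

lemma adj_minus: "adj (- x::'a::cstar_algebra) = - adj x"
  using adj_add[of x "- x"] by (simp add: add.inverse_unique[symmetric])

lemma adj_diff: "adj (x - y::'a::cstar_algebra) = adj x - adj y"
  by (simp only: adj_add adj_minus diff_conv_add_uminus)

lemma adj_one [simp]: "adj (1::'a::cstar_algebra) = 1"
  using adj_mult[of "adj 1" 1] by (simp add: adj_adj)

lemma adj_scaleR: "adj (scaleR r x::'a::cstar_algebra) = scaleR r (adj x)"
  by (simp add: scaleR_scaleC adj_scaleC)

lemma adj_power: "adj (x ^ k::'a::cstar_algebra) = adj x ^ k"
  by (induction k) (simp_all add: adj_mult power_Suc2 power_commutes)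

lemma norm_adj: "norm (adj x) = norm (x::'a::cstar_algebra)"
proof -
  have le: "norm y \<le> norm (adj y)" for y :: 'a
  proof (cases "y = 0")
    case False
    have "norm y * norm y = norm (adj y * y)"
      by (simp add: cstar_identity power2_eq_square)
    also have "\<dots> \<le> norm (adj y) * norm y"
      by (rule norm_mult_ineq)
    finally show ?thesis
      using False by simp
  qed simp
  show ?thesis
    using le[of x] le[of "adj x"] by (simp add: adj_adj)
qed

lemma bounded_linear_adj: "bounded_linear (adj :: 'a::cstar_algebra \<Rightarrow> 'a)"
  by (rule bounded_linear_intro[where K=1]) (simp_all add: adj_add adj_scaleR norm_adj)

lemma norm_square_diff_le:
  fixes x y :: "'a::real_normed_algebra"
  assumes "norm x \<le> 1/2" and "norm y \<le> 1/2"
  shows "norm (x * x - y * y) \<le> norm (x - y)"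
proof -
  have "x * x - y * y = x * (x - y) + (x - y) * y"
    by (simp add: algebra_simps)
  also have "norm \<dots> \<le> norm (x * (x - y)) + norm ((x - y) * y)"
    by (rule norm_triangle_ineq)
  also have "\<dots> \<le> norm x * norm (x - y) + norm (x - y) * norm y"
    by (intro add_mono norm_mult_ineq)
  also have "\<dots> \<le> 1/2 * norm (x - y) + norm (x - y) * (1/2)"
    using assms by (intro add_mono mult_mono) auto
  finally show ?thesis
    by simp
qed

text \<open>\<open>g\<close> is the fixed point of the contraction \<open>g \<mapsto> (g\<^sup>2 + h) / 2\<close> on the self-adjoint
  part of the ball of radius \<open>1/2\<close>; then \<open>1 - g\<close> is a square root of \<open>1 - h\<close>.\<close>
lemma selfadjoint_quadratic_solution:
  fixes h :: "'a::cstar_algebra"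
  assumes sa: "adj h = h" and nh: "norm h \<le> 1/4"
  shows "\<exists>g. adj g = g \<and> g * g = g + g - h"
proof -
  define S where "S = {g::'a. norm g \<le> 1/2} \<inter> {g. adj g = g}"
  define T where "T g = scaleR (1/2) (g * g + h)" for g :: 'a
  have "closed S"
    unfolding S_def
    by (intro closed_Int closed_Collect_le closed_Collect_eq continuous_on_norm_id continuous_on_const
        continuous_on_id linear_continuous_on bounded_linear_adj)
  moreover have "0 \<in> S"
    unfolding S_def by simp
  moreover have "T ` S \<subseteq> S"
  proof
    fix y assume "y \<in> T ` S"
    then obtain g where g: "g \<in> S" "y = T g"
      by blast
    have "norm (g * g + h) \<le> norm (g * g) + norm h"
      by (rule norm_triangle_ineq)
    also have "norm (g * g) \<le> norm g * norm g"
      by (rule norm_mult_ineq)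
    also have "norm g * norm g \<le> 1/2 * (1/2)"
      using g(1) unfolding S_def by (intro mult_mono) auto
    finally have "norm y \<le> 1/2"
      using nh unfolding g(2) T_def by simp
    moreover have "adj y = y"
      using g unfolding S_def T_def by (simp add: adj_scaleR adj_add adj_mult sa)
    ultimately show "y \<in> S"
      unfolding S_def by simp
  qed
  moreover have "dist (T x) (T y) \<le> 1/2 * dist x y" if "x \<in> S" "y \<in> S" for x y
  proof -
    have "T x - T y = scaleR (1/2) (x * x - y * y)"
      unfolding T_def by (simp add: algebra_simps scaleR_diff_right)
    then show ?thesis
      using norm_square_diff_le[of x y] that unfolding S_def dist_norm by simp
  qed
  ultimately have "\<exists>!g\<in>S. T g = g"
    by (intro Banach_fix[where c="1/2"]) (auto simp: complete_eq_closed)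
  then obtain g where g: "g \<in> S" "T g = g"
    by blast
  have "g * g + h = scaleR 2 (T g)"
    unfolding T_def by simp
  with g(2) have "g * g = g + g - h"
    by (simp add: scaleR_2 algebra_simps)
  moreover have "adj g = g"
    using g(1) unfolding S_def by simp
  ultimately show ?thesis
    by blast
qed

lemma positive_one_minus_selfadjoint:
  fixes h :: "'a::cstar_algebra"
  assumes "adj h = h" and "norm h \<le> 1/4"
  shows "positive (1 - h)"
proof -
  obtain g where "adj g = g" and "g * g = g + g - h"
    using selfadjoint_quadratic_solution[OF assms] by blast
  then have "adj (1 - g) * (1 - g) = 1 - h"
    by (simp add: adj_diff algebra_simps)
  then show ?thesis
    unfolding positive_def by (metis (no_types))
qed

lemma state_linear:
  assumes "is_state \<phi>"
  shows "\<phi> (x + y) = \<phi> x + \<phi> y" and "\<phi> (scaleC c x) = c * \<phi> x" and "\<phi> 0 = 0"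
    and "\<phi> (x - y) = \<phi> x - \<phi> y" and "\<phi> (scaleR r x) = of_real r * \<phi> x" and "\<phi> 1 = 1"
proof -
  have l: "clinear_functional \<phi>"
    using assms unfolding is_state_def by blast
  show add: "\<phi> (x + y) = \<phi> x + \<phi> y" for x y
    using l unfolding clinear_functional_def by blast
  show scale: "\<phi> (scaleC c x) = c * \<phi> x" for c x
    using l unfolding clinear_functional_def by blast
  show "\<phi> 0 = 0"
    using scale[of 0 0] by simp
  show "\<phi> (x - y) = \<phi> x - \<phi> y"
    using scale[of "-1" y] add[of x "scaleC (-1) y"] by (simp add: scaleC_minus_left scaleC_one)
  show "\<phi> (scaleR r x) = of_real r * \<phi> x"
    using scale by (simp add: scaleR_scaleC)
  show "\<phi> 1 = 1"
    using assms unfolding is_state_def by blast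
qed

lemma state_positive: "is_state \<phi> \<Longrightarrow> positive x \<Longrightarrow> 0 \<le> Re (\<phi> x)"
  unfolding is_state_def positive_def by blast

lemma state_adj_mult_le:
  fixes \<phi> :: "'a::cstar_algebra \<Rightarrow> complex"
  assumes st: "is_state \<phi>"
  shows "Re (\<phi> (adj y * y)) \<le> 4 * (norm y)\<^sup>2"
proof (cases "y = 0")
  case True
  then show ?thesis
    using state_linear(3)[OF st] by simp
next
  case False
  define t where "t = 2 * norm y"
  have t: "0 < t"
    using False by (simp add: t_def)
  define z where "z = scaleR (1 / t) y"
  define h where "h = adj z * z"
  have "norm z * norm z = 1/4"
    using t by (simp add: z_def t_def)
  then have "norm h \<le> 1/4"
    using norm_mult_ineq[of "adj z" z] unfolding h_def norm_adj by (simp add: power2_eq_square)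
  moreover have "adj h = h"
    by (simp add: h_def adj_mult adj_adj)
  ultimately have "0 \<le> Re (\<phi> (1 - h))"
    by (intro state_positive[OF st] positive_one_minus_selfadjoint)
  moreover have "h = scaleR (1 / t\<^sup>2) (adj y * y)"
    by (simp add: h_def z_def adj_scaleR power2_eq_square)
  ultimately have "Re (\<phi> (adj y * y)) / t\<^sup>2 \<le> 1"
    by (simp add: state_linear[OF st])
  then show ?thesis
    using t by (simp add: field_simps t_def power_mult_distrib)
qed

section \<open>*-homomorphisms, unitaries and the crossed product\<close>

lemma star_homD:
  assumes "star_hom f"
  shows "f (x * y) = f x * f y" and "f (adj x) = adj (f x)" and "f 1 = 1"
    and "f (x + y) = f x + f y" and "f (scaleC c x) = scaleC c (f x)" and "clinear f"
  using assms unfolding star_hom_def clinear_def by auto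

lemma aut_pow_inverse:
  assumes "star_aut \<alpha>"
  shows "aut_pow \<alpha> n (aut_pow \<alpha> (- n) x) = x"
proof -
  have "bij \<alpha>"
    using assms unfolding star_aut_def by blast
  then have "\<alpha> (inv \<alpha> x) = x" and "inv \<alpha> (\<alpha> x) = x" for x
    by (simp_all add: bij_is_surj surj_f_inv_f bij_is_inj)
  then have "(\<alpha> ^^ k) ((inv \<alpha> ^^ k) x) = x" and "(inv \<alpha> ^^ k) ((\<alpha> ^^ k) x) = x" for k x
    by (induction k arbitrary: x) (simp_all add: funpow_swap1)
  then show ?thesis
    by (cases "n = 0") (auto simp: aut_pow_def)
qed

lemma unitary_power:
  assumes "unitary v"
  shows "unitary (v ^ k)"
proof -
  have "adj v ^ k * v ^ k = 1 \<and> v ^ k * adj v ^ k = 1"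
  proof (induction k)
    case (Suc k)
    have "adj v ^ Suc k * v ^ Suc k = adj v ^ k * (adj v * v) * v ^ k"
      by (simp only: power_Suc2[of "adj v"] power_Suc[of v] mult.assoc)
    moreover have "v ^ Suc k * adj v ^ Suc k = v ^ k * (v * adj v) * adj v ^ k"
      by (simp only: power_Suc2[of v] power_Suc[of "adj v"] mult.assoc)
    ultimately show ?case
      using Suc assms by (simp add: unitary_def)
  qed simp
  then show ?thesis
    by (simp add: unitary_def adj_power)
qed

lemma adj_upow: "adj (upow v n) = upow v (- n)"
  by (cases "n = 0") (auto simp: upow_def adj_power adj_adj)

lemma unitary_upow: "unitary v \<Longrightarrow> unitary (upow v n)"
proof -
  assume "unitary v"
  moreover from this have "unitary (adj v)"
    by (simp add: unitary_def adj_adj)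
  ultimately show ?thesis
    by (simp add: upow_def unitary_power)
qed

lemma power_intertwining:
  fixes X :: "'b::monoid_mult"
  assumes "\<And>a. X * \<iota> a = \<iota> (\<gamma> a) * X"
  shows "X ^ k * \<iota> a = \<iota> ((\<gamma> ^^ k) a) * X ^ k"
proof (induction k arbitrary: a)
  case (Suc k)
  have "X ^ Suc k * \<iota> a = X * (X ^ k * \<iota> a)"
    by (simp add: mult.assoc)
  also have "\<dots> = (X * \<iota> ((\<gamma> ^^ k) a)) * X ^ k"
    by (simp add: Suc mult.assoc)
  also have "\<dots> = \<iota> ((\<gamma> ^^ Suc k) a) * X ^ Suc k"
    by (simp add: assms mult.assoc)
  finally show ?case .
qed simp

locale crossed_product_lift =
  fixes \<alpha> \<theta> :: "'a::cstar_algebra \<Rightarrow> 'a" and u :: 'a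
    and \<iota> :: "'a \<Rightarrow> 'b::cstar_algebra" and V :: 'b and E :: "'b \<Rightarrow> 'a" and \<Phi> :: "'b \<Rightarrow> 'b"
  assumes cp: "crossed_product \<alpha> \<iota> V E"
    and Phi_hom: "star_hom \<Phi>"
    and Phi_iota: "\<And>a. \<Phi> (\<iota> a) = \<iota> (\<theta> a)"
    and Phi_V: "\<Phi> V = \<iota> u * V"
begin

lemma alpha_aut: "star_aut \<alpha>"
  and iota_hom: "star_hom \<iota>"
  and V_unitary: "unitary V"
  and V_iota_adj_V: "V * \<iota> a * adj V = \<iota> (\<alpha> a)"
  and E_iota_upow: "E (\<iota> a * upow V n) = (if n = 0 then a else 0)"
  and E_clinear: "clinear E"
  and E_continuous: "continuous_on UNIV E"
  and E_positive: "positive (E (adj b * b))"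
  and dense_polynomials: "closure {\<Sum>n\<in>F. \<iota> (f n) * upow V n | F f. finite F} = UNIV"
  using cp unfolding crossed_product_def by (elim conjE; simp)+

lemmas iota = star_homD[OF iota_hom]

lemma E_iota: "E (\<iota> a) = a"
  using E_iota_upow[of a 0] by (simp add: upow_def)

lemma V_iota: "V * \<iota> a = \<iota> (\<alpha> a) * V"
proof -
  have "\<iota> (\<alpha> a) * V = V * \<iota> a * (adj V * V)"
    by (simp add: V_iota_adj_V[symmetric] mult.assoc)
  then show ?thesis
    using V_unitary by (simp add: unitary_def)
qed

lemma adj_V_iota: "adj V * \<iota> a = \<iota> (inv \<alpha> a) * adj V"
proof -
  have "\<alpha> (inv \<alpha> a) = a"
    using alpha_aut unfolding star_aut_def by (simp add: bij_is_surj surj_f_inv_f)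
  then have "adj V * (V * \<iota> (inv \<alpha> a)) * adj V = adj V * (\<iota> a * V) * adj V"
    by (simp add: V_iota)
  then show ?thesis
    using V_unitary unfolding unitary_def
    by (simp add: mult.assoc) (simp add: mult.assoc[symmetric])
qed

lemma V_power_iota: "V ^ k * \<iota> a = \<iota> ((\<alpha> ^^ k) a) * V ^ k"
  by (rule power_intertwining[of V \<iota> \<alpha>, OF V_iota])

lemma adj_V_power_iota: "adj V ^ k * \<iota> a = \<iota> ((inv \<alpha> ^^ k) a) * adj V ^ k"
  by (rule power_intertwining[of "adj V" \<iota> "inv \<alpha>", OF adj_V_iota])

lemma upow_iota: "upow V n * \<iota> a = \<iota> (aut_pow \<alpha> n a) * upow V n"
  by (simp add: upow_def aut_pow_def V_power_iota adj_V_power_iota)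

lemma upow_inverse: "upow V (- n) * upow V n = 1"
  using unitary_upow[OF V_unitary, of n] by (simp add: unitary_def adj_upow)

lemma E_iota_upow_iota: "E (\<iota> a * upow V m * \<iota> b) = (if m = 0 then a * b else 0)"
proof -
  have "\<iota> a * upow V m * \<iota> b = \<iota> (a * aut_pow \<alpha> m b) * upow V m"
    by (simp add: mult.assoc upow_iota iota(1))
  then show ?thesis
    by (simp add: E_iota_upow aut_pow_def)
qed

lemma Phi_V_power: "\<Phi> (V ^ k) = \<iota> (useq_pos \<alpha> u k) * V ^ k"
proof (induction k)
  case (Suc k)
  have "\<Phi> (V ^ Suc k) = \<Phi> (V ^ k) * \<Phi> V"
    unfolding power_Suc2 by (rule star_homD(1)[OF Phi_hom])
  also have "\<dots> = \<iota> (useq_pos \<alpha> u k) * (V ^ k * \<iota> u) * V"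
    by (simp add: Suc Phi_V mult.assoc)
  also have "\<dots> = \<iota> (useq_pos \<alpha> u (Suc k)) * V ^ Suc k"
    by (simp del: power_Suc add: V_power_iota mult.assoc iota(1) power_Suc2)
  finally show ?case .
qed (simp add: star_homD(3)[OF Phi_hom] iota(3))

lemma Phi_adj_V_power: "\<Phi> (adj V ^ k) = \<iota> (useq_neg \<alpha> u k) * adj V ^ k"
proof (induction k)
  case (Suc k)
  have "\<Phi> (adj V) = \<iota> (inv \<alpha> (adj u)) * adj V"
    by (simp add: star_homD(2)[OF Phi_hom] Phi_V adj_mult iota(2)[symmetric] adj_V_iota)
  then have "\<Phi> (adj V ^ Suc k) = \<iota> (useq_neg \<alpha> u k) * (adj V ^ k * \<iota> (inv \<alpha> (adj u))) * adj V"
    unfolding power_Suc2 star_homD(1)[OF Phi_hom] by (simp add: Suc mult.assoc)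
  also have "\<dots> = \<iota> (useq_neg \<alpha> u (Suc k)) * adj V ^ Suc k"
    by (simp del: power_Suc add: adj_V_power_iota mult.assoc iota(1) power_Suc2 funpow_swap1)
  finally show ?case .
qed (simp add: star_homD(3)[OF Phi_hom] iota(3))

lemma Phi_upow: "\<Phi> (upow V n) = \<iota> (useq \<alpha> u n) * upow V n"
  by (simp add: upow_def useq_def Phi_V_power Phi_adj_V_power)

lemma Phi_funpow_iota: "(\<Phi> ^^ k) (\<iota> b) = \<iota> ((\<theta> ^^ k) b)"
  by (induction k) (simp_all add: Phi_iota)

end

section \<open>Covariant GNS representations and weak clustering\<close>

locale covariant_GNS_rep =
  fixes \<phi> :: "'b::cstar_algebra \<Rightarrow> complex" and \<beta> :: "'b \<Rightarrow> 'b"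
    and \<pi> :: "'b \<Rightarrow> 'h::chilbert \<Rightarrow> 'h" and W :: "'h \<Rightarrow> 'h" and \<xi> :: 'h
  assumes GNS: "covariant_GNS \<phi> \<beta> \<pi> W \<xi>"
    and beta_hom: "star_hom \<beta>"
begin

lemma pi_representation: "representation \<pi>"
  and cinner_xi_pi_xi: "cinner \<xi> (\<pi> b \<xi>) = \<phi> b"
  and cyclic: "closure (range (\<lambda>b. \<pi> b \<xi>)) = UNIV"
  and W_unitary: "unitary_op W"
  and W_xi: "W \<xi> = \<xi>"
  and W_pi_xi: "W (\<pi> b \<xi>) = \<pi> (\<beta> b) \<xi>"
  using GNS unfolding covariant_GNS_def by (elim conjE; simp)+

lemma pi_clinear: "clinear (\<pi> b)"
  and pi_add: "\<pi> (b + c) x = \<pi> b x + \<pi> c x"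
  and pi_scaleC: "\<pi> (scaleC z b) x = scaleC z (\<pi> b x)"
  and pi_mult: "\<pi> (b * c) x = \<pi> b (\<pi> c x)"
  and pi_one: "\<pi> 1 x = x"
  and pi_adj: "cinner (\<pi> (adj b) x) y = cinner x (\<pi> b y)"
  using pi_representation unfolding representation_def bounded_clinear_op_def by auto

lemma pi_bounded_linear: "bounded_linear (\<pi> b)"
  using pi_representation bounded_clinear_op_bounded_linear unfolding representation_def by blast

lemma pi_zero: "\<pi> 0 x = 0"
  using pi_scaleC[of 0 0 x] by simp

lemma pi_diff: "\<pi> (b - c) x = \<pi> b x - \<pi> c x"
  using pi_add[of b "scaleC (-1) c" x] pi_scaleC[of "-1" c x]
  by (simp add: scaleC_minus_left scaleC_one)

lemma pi_sum: "\<pi> (sum f A) x = (\<Sum>i\<in>A. \<pi> (f i) x)"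
  by (induction A rule: infinite_finite_induct) (auto simp: pi_zero pi_add)

lemma continuous_on_pi: "continuous_on UNIV (\<pi> b)"
  by (rule linear_continuous_on[OF pi_bounded_linear])

lemma continuous_on_W: "continuous_on UNIV W"
  by (rule linear_continuous_on[OF unitary_op_bounded_linear[OF W_unitary]])

lemma cinner_pi_xi: "cinner (\<pi> b \<xi>) (\<pi> c \<xi>) = \<phi> (adj b * c)"
  using pi_adj[of "adj b" \<xi> "\<pi> c \<xi>"] by (simp add: adj_adj cinner_xi_pi_xi[symmetric] pi_mult)

lemma W_pi: "W (\<pi> b z) = \<pi> (\<beta> b) (W z)"
proof (rule continuous_eq_on_closure[where S="range (\<lambda>c. \<pi> c \<xi>)"
      and f="\<lambda>z. W (\<pi> b z)" and g="\<lambda>z. \<pi> (\<beta> b) (W z)"])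
  show "continuous_on UNIV (\<lambda>z. W (\<pi> b z))" and "continuous_on UNIV (\<lambda>z. \<pi> (\<beta> b) (W z))"
    using continuous_on_pi continuous_on_W by (auto intro: continuous_on_compose2[of UNIV])
  show "W (\<pi> b s) = \<pi> (\<beta> b) (W s)" if "s \<in> range (\<lambda>c. \<pi> c \<xi>)" for s
    using that by (auto simp: pi_mult[symmetric] W_pi_xi star_homD(1)[OF beta_hom])
qed (simp add: cyclic)

lemma W_funpow_pi_xi: "(W ^^ k) (\<pi> b \<xi>) = \<pi> ((\<beta> ^^ k) b) \<xi>"
  by (induction k) (simp_all add: W_pi_xi)

lemma Cesaro_mean_eq_cinner_ergodic_avg:
  "(\<Sum>k<n. \<phi> (a * (\<beta> ^^ k) b)) / of_nat n = cinner (\<pi> (adj a) \<xi>) (ergodic_avg W n (\<pi> b \<xi>))"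
  by (simp add: ergodic_avg_def cinner_scaleR_right cinner_sum_right W_funpow_pi_xi cinner_pi_xi
      adj_adj divide_inverse mult.commute)

lemma weakly_clustering_iff_fixed_vectors:
  "weakly_clustering \<phi> \<beta> \<longleftrightarrow> (\<forall>x. W x = x \<longrightarrow> x = scaleC (cinner \<xi> x) \<xi>)"
proof
  assume wc: "weakly_clustering \<phi> \<beta>"
  show "\<forall>x. W x = x \<longrightarrow> x = scaleC (cinner \<xi> x) \<xi>"
  proof (intro allI impI)
    fix x assume "W x = x"
    then show "x = scaleC (cinner \<xi> x) \<xi>"
    proof (rule fixed_vector_eq_multiple[OF W_unitary _ _ _, where f="\<lambda>b. \<pi> b \<xi>"])
      fix b c
      have "(\<lambda>n. (\<Sum>k<n. \<phi> (adj c * (\<beta> ^^ k) b)) / of_nat n) \<longlonglongrightarrow> \<phi> (adj c) * \<phi> b"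
        using wc unfolding weakly_clustering_def by blast
      then show "(\<lambda>n. cinner (\<pi> c \<xi>) (ergodic_avg W n (\<pi> b \<xi>))) \<longlonglongrightarrow>
          cinner (\<pi> c \<xi>) \<xi> * cinner \<xi> (\<pi> b \<xi>)"
        using cinner_pi_xi[of c 1]
        by (simp add: Cesaro_mean_eq_cinner_ergodic_avg adj_adj pi_one cinner_xi_pi_xi)
    qed (simp_all add: cyclic)
  qed
next
  assume "\<forall>x. W x = x \<longrightarrow> x = scaleC (cinner \<xi> x) \<xi>"
  then have "(\<lambda>n. cinner (\<pi> (adj a) \<xi>) (ergodic_avg W n (\<pi> b \<xi>))) \<longlonglongrightarrow>
      cinner (\<pi> (adj a) \<xi>) \<xi> * cinner \<xi> (\<pi> b \<xi>)" for a b
    by (intro tendsto_cinner_ergodic_avg[OF W_unitary W_xi])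
  moreover have "cinner (\<pi> (adj a) \<xi>) \<xi> = \<phi> a" for a
    using cinner_pi_xi[of "adj a" 1] by (simp add: adj_adj pi_one)
  ultimately show "weakly_clustering \<phi> \<beta>"
    unfolding weakly_clustering_def Cesaro_mean_eq_cinner_ergodic_avg cinner_xi_pi_xi
    by simp
qed

end

section \<open>Fixed vectors of the lifted dynamics\<close>

locale lifted_dynamics =
  crossed_product_lift \<alpha> \<theta> u \<iota> V E \<Phi> + covariant_GNS_rep \<omega> \<Phi> \<pi> W \<xi>
  for \<alpha> \<theta> :: "'a::cstar_algebra \<Rightarrow> 'a" and u \<iota> and V :: "'b::cstar_algebra" and E \<Phi>
    and \<omega> and \<pi> :: "'b \<Rightarrow> 'h::chilbert \<Rightarrow> 'h" and W \<xi> +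
  fixes \<omega>\<^sub>o :: "'a \<Rightarrow> complex" and K :: "'h set"
  assumes theta_aut: "star_aut \<theta>"
    and omega_o_state: "is_state \<omega>\<^sub>o"
    and omega_def: "\<omega> = (\<lambda>b. \<omega>\<^sub>o (E b))"
    and K_def: "K = closure (range (\<lambda>a. \<pi> (\<iota> a) \<xi>))"
begin

lemma power2_norm_pi_xi_le: "(norm (\<pi> b \<xi>))\<^sup>2 \<le> 4 * norm (E (adj b * b))"
proof -
  obtain y where y: "E (adj b * b) = adj y * y"
    using E_positive[of b] unfolding positive_def by blast
  have "(norm (\<pi> b \<xi>))\<^sup>2 = Re (\<omega>\<^sub>o (adj y * y))"
    by (simp add: power2_norm_eq_cinner cinner_pi_xi omega_def y)
  also have "\<dots> \<le> 4 * (norm y)\<^sup>2"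
    by (rule state_adj_mult_le[OF omega_o_state])
  also have "(norm y)\<^sup>2 = norm (E (adj b * b))"
    by (simp add: y cstar_identity)
  finally show ?thesis .
qed

lemma continuous_on_pi_xi: "continuous_on UNIV (\<lambda>b. \<pi> b \<xi>)"
proof (rule continuous_on_sequentiallyI)
  fix p :: "nat \<Rightarrow> 'b" and b assume p: "p \<longlonglongrightarrow> b"
  define e where "e k = norm (E (adj (p k - b) * (p k - b)))" for k
  have "(\<lambda>k. p k - b) \<longlonglongrightarrow> 0"
    using p by (simp add: Lim_null[symmetric])
  then have "(\<lambda>k. adj (p k - b) * (p k - b)) \<longlonglongrightarrow> adj 0 * 0"
    by (intro tendsto_mult bounded_linear.tendsto[OF bounded_linear_adj])
  moreover have "isCont E 0"
    using E_continuous by (simp add: continuous_on_eq_continuous_at)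
  ultimately have "(\<lambda>k. E (adj (p k - b) * (p k - b))) \<longlonglongrightarrow> E 0"
    using isCont_tendsto_compose[of 0 E] by simp
  then have "e \<longlonglongrightarrow> 0"
    unfolding e_def using clinear_0[OF E_clinear] by (simp add: tendsto_norm_zero)
  then have lim: "(\<lambda>k. 2 * sqrt (e k)) \<longlonglongrightarrow> 2 * sqrt 0"
    by (intro tendsto_mult tendsto_const tendsto_real_sqrt)
  have bound: "norm (\<pi> (p k) \<xi> - \<pi> b \<xi>) \<le> 2 * sqrt (e k)" for k
  proof -
    have "(norm (\<pi> (p k - b) \<xi>))\<^sup>2 \<le> (2 * sqrt (e k))\<^sup>2"
      using power2_norm_pi_xi_le[of "p k - b"] by (simp add: e_def power_mult_distrib)
    then have "norm (\<pi> (p k - b) \<xi>) \<le> 2 * sqrt (e k)"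
      by (rule power2_le_imp_le) (simp add: e_def)
    then show ?thesis
      by (simp only: pi_diff)
  qed
  have "\<forall>\<^sub>F k in sequentially. norm (\<pi> (p k) \<xi> - \<pi> b \<xi>) \<le> 2 * sqrt (e k)"
    by (intro always_eventually allI bound)
  from Lim_null_comparison[OF this] lim have "(\<lambda>k. \<pi> (p k) \<xi> - \<pi> b \<xi>) \<longlonglongrightarrow> 0"
    by simp
  then show "(\<lambda>k. \<pi> (p k) \<xi>) \<longlonglongrightarrow> \<pi> b \<xi>"
    by (simp add: Lim_null[symmetric])
qed

lemma orthogonal_to_dense_eq_0:
  assumes D: "closure D = UNIV" and orth: "\<And>b. b \<in> D \<Longrightarrow> cinner (\<pi> b \<xi>) z = 0"
  shows "z = 0"
proof -
  have cont: "continuous_on UNIV (\<lambda>y. cinner y z)"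
    by (intro continuous_on_cinner continuous_on_id continuous_on_const)
  have "continuous_on UNIV (\<lambda>b. cinner (\<pi> b \<xi>) z)"
    using continuous_on_compose2[OF cont continuous_on_pi_xi] by simp
  then have "cinner (\<pi> b \<xi>) z = 0" for b
    by (rule continuous_eq_on_closure[where g="\<lambda>_. 0" and S=D, OF _ continuous_on_const orth])
      (simp_all add: D)
  then have "cinner z z = 0"
    using continuous_eq_on_closure[where f="\<lambda>y. cinner y z" and g="\<lambda>_. 0"
        and S="range (\<lambda>b. \<pi> b \<xi>)" and x=z, OF cont continuous_on_const]
    by (simp add: cyclic image_iff) blast
  then show ?thesis
    by simp
qed

lemma clinear_pi_iota_xi: "clinear (\<lambda>a. \<pi> (\<iota> a) \<xi>)"
  unfolding clinear_def by (simp add: iota(4,5) pi_add pi_scaleC)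

lemma K_csubspace: "csubspace K"
  unfolding K_def by (intro csubspace_closure csubspace_range clinear_pi_iota_xi)

lemma K_closed: "closed K"
  unfolding K_def by simp

lemma pi_iota_xi_in_K: "\<pi> (\<iota> a) \<xi> \<in> K"
  unfolding K_def by (rule closure_subset[THEN subsetD]) (rule rangeI)

lemma xi_in_K: "\<xi> \<in> K"
  using pi_iota_xi_in_K[of 1] by (simp add: iota(3) pi_one)

lemma K_invariant:
  assumes "continuous_on UNIV T" and "\<And>a. T (\<pi> (\<iota> a) \<xi>) \<in> K" and "k \<in> K"
  shows "T k \<in> K"
proof -
  have "T ` closure (range (\<lambda>a. \<pi> (\<iota> a) \<xi>)) \<subseteq> K"
    using assms(1,2) K_closed by (intro image_closure_subset) (auto intro: continuous_on_subset)
  with assms(3) show ?thesis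
    unfolding K_def by blast
qed

lemma W_in_K: "k \<in> K \<Longrightarrow> W k \<in> K"
  by (rule K_invariant[OF continuous_on_W]) (simp add: W_pi_xi Phi_iota pi_iota_xi_in_K)

lemma inv_W_in_K: "k \<in> K \<Longrightarrow> inv W k \<in> K"
proof (rule K_invariant[OF linear_continuous_on[OF unitary_op_inv(5)[OF W_unitary]]])
  fix a
  have "\<theta> (inv \<theta> a) = a"
    using theta_aut unfolding star_aut_def by (simp add: bij_is_surj surj_f_inv_f)
  then have "W (\<pi> (\<iota> (inv \<theta> a)) \<xi>) = \<pi> (\<iota> a) \<xi>"
    by (simp add: W_pi_xi Phi_iota)
  then have "inv W (\<pi> (\<iota> a) \<xi>) = \<pi> (\<iota> (inv \<theta> a)) \<xi>"
    by (metis unitary_op_inv(2)[OF W_unitary])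
  then show "inv W (\<pi> (\<iota> a) \<xi>) \<in> K"
    by (simp add: pi_iota_xi_in_K)
qed

lemma pi_iota_in_K: "k \<in> K \<Longrightarrow> \<pi> (\<iota> b) k \<in> K"
  by (rule K_invariant[OF continuous_on_pi]) (simp add: pi_mult[symmetric] iota(1)[symmetric] pi_iota_xi_in_K)

lemma orth_proj_K_W: "orth_proj K (W z) = W (orth_proj K z)"
  by (rule orth_proj_commute[OF K_csubspace K_closed unitary_op_clinear[OF W_unitary] W_in_K inv_W_in_K
        unitary_op_inv(3)[OF W_unitary]])

lemma orth_proj_K_pi_iota: "orth_proj K (\<pi> (\<iota> b) z) = \<pi> (\<iota> b) (orth_proj K z)"
proof (rule orth_proj_commute[OF K_csubspace K_closed pi_clinear])
  show "cinner (\<pi> (\<iota> (adj b)) v) w = cinner v (\<pi> (\<iota> b) w)" for v w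
    unfolding iota(2) by (rule pi_adj)
qed (simp_all add: pi_iota_in_K)

definition twisted_W :: "int \<Rightarrow> 'h \<Rightarrow> 'h" where
  "twisted_W n \<eta> = \<pi> (\<iota> (aut_pow \<alpha> (- n) (useq \<alpha> u n))) (W \<eta>)"

lemma W_pi_upow: "W (\<pi> (upow V n) z) = \<pi> (upow V n) (twisted_W n z)"
proof -
  have "\<iota> (useq \<alpha> u n) * upow V n = upow V n * \<iota> (aut_pow \<alpha> (- n) (useq \<alpha> u n))"
    by (simp add: upow_iota aut_pow_inverse[OF alpha_aut])
  then show ?thesis
    by (simp add: W_pi Phi_upow twisted_W_def pi_mult[symmetric])
qed

lemma pi_upow_inverse: "\<pi> (upow V (- n)) (\<pi> (upow V n) z) = z"
  by (simp add: pi_mult[symmetric] upow_inverse pi_one)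

lemma pi_upow_K_orthogonal:
  assumes m: "m \<noteq> 0" and k: "k \<in> K" and k': "k' \<in> K"
  shows "cinner (\<pi> (upow V m) k) k' = 0"
proof -
  have cont: "continuous_on UNIV (\<lambda>y. cinner (\<pi> (upow V m) y) x)" for x
    by (rule continuous_on_cinner[OF continuous_on_pi continuous_on_const])
  have cont': "continuous_on UNIV (\<lambda>y. cinner x y)" for x :: 'h
    by (intro continuous_on_cinner continuous_on_id continuous_on_const)
  have gen: "cinner (\<pi> (upow V m) (\<pi> (\<iota> a) \<xi>)) (\<pi> (\<iota> b) \<xi>) = 0" for a b
  proof -
    have "adj (upow V m * \<iota> a) * \<iota> b = \<iota> (adj a) * upow V (- m) * \<iota> b"
      by (simp add: adj_mult adj_upow iota(2))
    then show ?thesis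
      using m by (simp add: pi_mult[symmetric] cinner_pi_xi omega_def E_iota_upow_iota
          state_linear(3)[OF omega_o_state])
  qed
  have gen_K: "cinner (\<pi> (upow V m) (\<pi> (\<iota> a) \<xi>)) k' = 0" for a
    by (rule continuous_eq_on_closure[where f="cinner (\<pi> (upow V m) (\<pi> (\<iota> a) \<xi>))" and g="\<lambda>_. 0",
          OF cont' continuous_on_const _ k'[unfolded K_def]])
      (auto simp: gen)
  show ?thesis
    by (rule continuous_eq_on_closure[where f="\<lambda>y. cinner (\<pi> (upow V m) y) k'" and g="\<lambda>_. 0",
          OF cont continuous_on_const _ k[unfolded K_def]])
      (auto simp: gen_K)
qed

lemma fixed_in_K_imp_no_twisted_fixed:
  assumes fixed_in_K: "\<And>x. W x = x \<Longrightarrow> x \<in> K"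
    and n: "n \<noteq> 0" and \<eta>: "\<eta> \<in> K" and fixed: "twisted_W n \<eta> = \<eta>"
  shows "\<eta> = 0"
proof -
  define x where "x = \<pi> (upow V n) \<eta>"
  have "W x = x"
    using fixed by (simp add: x_def W_pi_upow)
  then have "x \<in> K"
    by (rule fixed_in_K)
  then have "cinner x x = 0"
    using pi_upow_K_orthogonal[OF n \<eta>] by (simp add: x_def)
  then have "\<pi> (upow V (- n)) x = 0"
    by (simp add: clinear_0[OF pi_clinear])
  then show "\<eta> = 0"
    by (simp add: x_def pi_upow_inverse)
qed

lemma fixed_orthogonal_to_shifted_K:
  assumes no_fixed: "\<And>\<eta>. \<eta> \<in> K \<Longrightarrow> twisted_W n \<eta> = \<eta> \<Longrightarrow> \<eta> = 0"
    and Wx: "W x = x" and k: "k \<in> K"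
  shows "cinner (\<pi> (upow V n) k) x = 0"
proof -
  define w where "w = \<pi> (upow V (- n)) x"
  have x: "x = \<pi> (upow V n) w"
    using pi_upow_inverse[of "- n" x] by (simp add: w_def)
  then have "\<pi> (upow V n) (twisted_W n w) = \<pi> (upow V n) w"
    using Wx by (simp add: W_pi_upow[symmetric])
  then have "twisted_W n w = w"
    using pi_upow_inverse[of n "twisted_W n w"] pi_upow_inverse[of n w] by simp
  moreover have "twisted_W n (orth_proj K w) = orth_proj K (twisted_W n w)"
    by (simp add: twisted_W_def orth_proj_K_W orth_proj_K_pi_iota)
  ultimately have "orth_proj K w = 0"
    using no_fixed orth_proj(1)[OF K_csubspace K_closed] by simp
  then have "cinner k w = 0"
    using orth_proj(2)[OF K_csubspace K_closed, of w] k by simp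
  moreover have "cinner k w = cinner (\<pi> (upow V n) k) x"
    using pi_adj[of "upow V (- n)" k x] by (simp add: w_def adj_upow)
  ultimately show ?thesis
    by simp
qed

lemma no_twisted_fixed_imp_fixed_in_K:
  assumes no_fixed: "\<And>n \<eta>. n \<noteq> 0 \<Longrightarrow> \<eta> \<in> K \<Longrightarrow> twisted_W n \<eta> = \<eta> \<Longrightarrow> \<eta> = 0"
    and Wx: "W x = x"
  shows "x \<in> K"
proof -
  note P = orth_proj[OF K_csubspace K_closed]
  define z where "z = x - orth_proj K x"
  have monomial: "cinner (\<pi> (\<iota> a * upow V n) \<xi>) z = 0" for a n
  proof -
    define k where "k = \<pi> (\<iota> (aut_pow \<alpha> (- n) a)) \<xi>"
    have k: "k \<in> K"
      unfolding k_def by (rule pi_iota_xi_in_K)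
    have "\<iota> a * upow V n = upow V n * \<iota> (aut_pow \<alpha> (- n) a)"
      by (simp add: upow_iota aut_pow_inverse[OF alpha_aut])
    then have e: "\<pi> (\<iota> a * upow V n) \<xi> = \<pi> (upow V n) k"
      by (simp add: k_def pi_mult)
    show ?thesis
    proof (cases "n = 0")
      case True
      show ?thesis
        unfolding e z_def using P(2)[of x] k True by (simp add: upow_def pi_one)
    next
      case False
      show ?thesis
        unfolding e z_def using fixed_orthogonal_to_shifted_K[OF no_fixed[OF False] Wx k]
          pi_upow_K_orthogonal[OF False k P(1)]
        by (simp add: cinner_diff_right)
    qed
  qed
  have "z = 0"
  proof (rule orthogonal_to_dense_eq_0[OF dense_polynomials])
    fix b assume "b \<in> {\<Sum>n\<in>F. \<iota> (f n) * upow V n | F f. finite F}"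
    then obtain F f where "b = (\<Sum>n\<in>F. \<iota> (f n) * upow V n)"
      by blast
    then show "cinner (\<pi> b \<xi>) z = 0"
      by (simp add: pi_sum cinner_sum_left monomial)
  qed
  then show "x \<in> K"
    using P(1)[of x] by (simp add: z_def)
qed

lemma fixed_in_K_iff_no_twisted_fixed:
  "(\<forall>x. W x = x \<longrightarrow> x \<in> K) \<longleftrightarrow> (\<forall>n. n \<noteq> 0 \<longrightarrow> (\<forall>\<eta>\<in>K. twisted_W n \<eta> = \<eta> \<longrightarrow> \<eta> = 0))"
proof
  assume "\<forall>x. W x = x \<longrightarrow> x \<in> K"
  then show "\<forall>n. n \<noteq> 0 \<longrightarrow> (\<forall>\<eta>\<in>K. twisted_W n \<eta> = \<eta> \<longrightarrow> \<eta> = 0)"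
    by (intro allI impI ballI fixed_in_K_imp_no_twisted_fixed) simp_all
next
  assume "\<forall>n. n \<noteq> 0 \<longrightarrow> (\<forall>\<eta>\<in>K. twisted_W n \<eta> = \<eta> \<longrightarrow> \<eta> = 0)"
  then show "\<forall>x. W x = x \<longrightarrow> x \<in> K"
    by (intro allI impI no_twisted_fixed_imp_fixed_in_K) simp_all
qed

lemma E1_on_K_eq_E1_iff: "E1_on K W = E1 W \<longleftrightarrow> (\<forall>x. W x = x \<longrightarrow> x \<in> K)"
proof -
  have "orth_proj (K \<inter> {\<eta>. W \<eta> = \<eta>}) = orth_proj {\<eta>. W \<eta> = \<eta>} \<longleftrightarrow> {\<eta>. W \<eta> = \<eta>} \<subseteq> K"
    by (rule orth_proj_Int_eq_iff[OF K_csubspace K_closed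
          csubspace_fixed_points[OF unitary_op_clinear[OF W_unitary]]
          closed_fixed_points[OF unitary_op_bounded_linear[OF W_unitary]]])
  moreover have "{\<eta>\<in>K. W \<eta> = \<eta>} = K \<inter> {\<eta>. W \<eta> = \<eta>}"
    by blast
  ultimately show ?thesis
    unfolding E1_on_def E1_def by (simp add: subset_eq)
qed

lemma fixed_in_K_eq_multiple:
  assumes wc: "weakly_clustering \<omega>\<^sub>o \<theta>" and Wx: "W x = x" and x: "x \<in> K"
  shows "x = scaleC (cinner \<xi> x) \<xi>"
proof (rule fixed_vector_eq_multiple[OF W_unitary Wx, where f="\<lambda>a. \<pi> (\<iota> a) \<xi>"])
  show "x \<in> closure (range (\<lambda>a. \<pi> (\<iota> a) \<xi>))" and "\<xi> \<in> closure (range (\<lambda>a. \<pi> (\<iota> a) \<xi>))"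
    using x xi_in_K unfolding K_def by simp_all
  fix b c
  have "\<omega> (\<iota> a * (\<Phi> ^^ k) (\<iota> b)) = \<omega>\<^sub>o (a * (\<theta> ^^ k) b)" for a k
    by (simp add: omega_def Phi_funpow_iota iota(1)[symmetric] E_iota)
  then have "cinner (\<pi> (\<iota> c) \<xi>) (ergodic_avg W n (\<pi> (\<iota> b) \<xi>)) =
      (\<Sum>k<n. \<omega>\<^sub>o (adj c * (\<theta> ^^ k) b)) / of_nat n" for n
    using Cesaro_mean_eq_cinner_ergodic_avg[of "\<iota> (adj c)" "\<iota> b" n]
    by (simp add: iota(2)[symmetric] adj_adj)
  moreover have "(\<lambda>n. (\<Sum>k<n. \<omega>\<^sub>o (adj c * (\<theta> ^^ k) b)) / of_nat n) \<longlonglongrightarrow> \<omega>\<^sub>o (adj c) * \<omega>\<^sub>o b"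
    using wc unfolding weakly_clustering_def by blast
  moreover have "cinner (\<pi> (\<iota> c) \<xi>) \<xi> = \<omega>\<^sub>o (adj c)"
    using cinner_pi_xi[of "\<iota> c" 1] by (simp add: pi_one omega_def iota(2)[symmetric] E_iota)
  moreover have "cinner \<xi> (\<pi> (\<iota> b) \<xi>) = \<omega>\<^sub>o b"
    by (simp add: cinner_xi_pi_xi omega_def E_iota)
  ultimately show "(\<lambda>n. cinner (\<pi> (\<iota> c) \<xi>) (ergodic_avg W n (\<pi> (\<iota> b) \<xi>))) \<longlonglongrightarrow>
      cinner (\<pi> (\<iota> c) \<xi>) \<xi> * cinner \<xi> (\<pi> (\<iota> b) \<xi>)"
    by simp
qed

lemma weakly_clustering_iff_fixed_in_K:
  assumes wc: "weakly_clustering \<omega>\<^sub>o \<theta>"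
  shows "weakly_clustering \<omega> \<Phi> \<longleftrightarrow> (\<forall>x. W x = x \<longrightarrow> x \<in> K)"
  unfolding weakly_clustering_iff_fixed_vectors
proof (intro iffI allI impI)
  fix x assume "\<forall>x. W x = x \<longrightarrow> x = scaleC (cinner \<xi> x) \<xi>" and "W x = x"
  then have "x = scaleC (cinner \<xi> x) \<xi>"
    by blast
  also have "\<dots> \<in> K"
    using K_csubspace xi_in_K unfolding csubspace_def by blast
  finally show "x \<in> K" .
next
  fix x assume "\<forall>x. W x = x \<longrightarrow> x \<in> K" and "W x = x"
  then show "x = scaleC (cinner \<xi> x) \<xi>"
    using fixed_in_K_eq_multiple[OF wc] by blast
qed

end

theorem mainTheorem8:
  fixes \<theta> \<alpha> :: "'a::cstar_algebra \<Rightarrow> 'a" and u :: 'a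
    and \<iota> :: "'a \<Rightarrow> 'b::cstar_algebra" and V :: 'b and E :: "'b \<Rightarrow> 'a"
    and \<Phi> :: "'b \<Rightarrow> 'b"
    and \<omega>\<^sub>o :: "'a \<Rightarrow> complex" and \<omega> :: "'b \<Rightarrow> complex"
    and \<pi> :: "'b \<Rightarrow> 'h::chilbert \<Rightarrow> 'h" and W :: "'h \<Rightarrow> 'h" and \<xi> :: 'h
    and K :: "'h set"
  assumes aut_theta: "star_aut \<theta>" and aut_alpha: "star_aut \<alpha>"
    and cp: "crossed_product \<alpha> \<iota> V E"
    and unit_u: "unitary u"
    and comm: "\<And>a. u * \<alpha> (\<theta> a) = \<theta> (\<alpha> a) * u"
    and Phi_aut: "star_aut \<Phi>"
    and Phi_A: "\<And>a. \<Phi> (\<iota> a) = \<iota> (\<theta> a)"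
    and Phi_V: "\<Phi> V = \<iota> u * V"
    and omega_o: "invariant_state \<omega>\<^sub>o \<theta>"
    and omega_def: "\<omega> = (\<lambda>b. \<omega>\<^sub>o (E b))"
    and GNS: "covariant_GNS \<omega> \<Phi> \<pi> W \<xi>"
    and K_def: "K = closure (range (\<lambda>a. \<pi> (\<iota> a) \<xi>))"
  shows "(E1_on K W = E1 W \<longleftrightarrow>
            (\<forall>n::int. n \<noteq> 0 \<longrightarrow>
               (\<forall>\<eta>\<in>K. \<pi> (\<iota> (aut_pow \<alpha> (- n) (useq \<alpha> u n))) (W \<eta>) = \<eta> \<longrightarrow> \<eta> = 0)))
       \<and> (weakly_clustering \<omega>\<^sub>o \<theta> \<longrightarrow>
            (weakly_clustering \<omega> \<Phi> \<longleftrightarrow>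
              (\<forall>n::int. n \<noteq> 0 \<longrightarrow>
                 (\<forall>\<eta>\<in>K. \<pi> (\<iota> (aut_pow \<alpha> (- n) (useq \<alpha> u n))) (W \<eta>) = \<eta> \<longrightarrow> \<eta> = 0))))"
proof -
  \<comment> \<open>Unitarity of \<open>u\<close>, \<open>comm\<close> and the \<open>\<theta>\<close>-invariance of \<open>\<omega>\<^sub>o\<close> only guarantee that \<open>\<Phi>\<close> and \<open>W\<close>
    exist; given them, the argument does not use these hypotheses.\<close>
  interpret lifted_dynamics \<alpha> \<theta> u \<iota> V E \<Phi> \<omega> \<pi> W \<xi> \<omega>\<^sub>o K
    using cp Phi_aut Phi_A Phi_V GNS aut_theta omega_o omega_def K_def
    by unfold_locales (auto simp: star_aut_def invariant_state_def)
  have ii: "(\<forall>x. W x = x \<longrightarrow> x \<in> K) \<longleftrightarrow>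
      (\<forall>n::int. n \<noteq> 0 \<longrightarrow>
         (\<forall>\<eta>\<in>K. \<pi> (\<iota> (aut_pow \<alpha> (- n) (useq \<alpha> u n))) (W \<eta>) = \<eta> \<longrightarrow> \<eta> = 0))"
    using fixed_in_K_iff_no_twisted_fixed unfolding twisted_W_def .
  show ?thesis
    using E1_on_K_eq_E1_iff weakly_clustering_iff_fixed_in_K ii by blast
qed

end
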